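(* Let $0\le\mu<L\le+\infty$, $N\ge1$, $R\ge 0$, let $H=\{h_{i,k}\}$ define a fixed-step method with $N$ steps, and let $b\in\mathbb{R}^{N+1}$, $C\in\mathbb{S}^{N+2}$. If $d\ge N+2$, then $w^{(d)}_{\mu,L}(R,H,N,b,C)=w^{sdp}_{\mu,L}(R,H,N,b,C)$; that is, the worst-case performance after $N$ iterations of the method $H$, measured by the criterion $b^{\top}f+\mathrm{Tr}(CG)$, over functions in $\mathcal{F}_{\mu,L}(\mathbb{R}^d)$ equals the optimal value of the semidefinite program defining $w^{sdp}_{\mu,L}$.
   Context: Conventions: $1/(+\infty)=0$, $+\infty-\mu=+\infty$. For $\mu\ge0$, $L\in\mathbb{R}_+\cup\{+\infty\}$, $\mu<L$, $\mathcal{F}_{\mu,L}(\mathbb{R}^d)$ is the set of proper closed convex $f:\mathbb{R}^d\to\mathbb{R}\cup\{+\infty\}$ with (i) $\frac1L\|g_1-g_2\|_2\le\|x_1-x_2\|_2$ for all $x_1,x_2$ and all $g_1\in\partial f(x_1)$, $g_2\in\partial f(x_2)$, and (ii) $f-\frac\mu2\|\cdot\|_2^2$ convex. A set $\{(x_i,g_i,f_i)\}_{i\in I}$ is $\mathcal{F}_{\mu,L}$-interpolable if some $f\in\mathcal{F}_{\mu,L}(\mathbb{R}^d)$ has $f(x_i)=f_i$, $g_i\in\partial f(x_i)$ for all $i\in I$. Fixed-step method with $N$ steps: scalars $h_{i,k}$ for $1\le i\le N$, $0\le k\le N-1$, with $h_{i,k}=0$ for $k\ge i$ (a lower-triangular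 $H\in\mathbb{R}^{N\times N}$); starting from $x_0$, iterates are $x_i=x_0-\sum_{k=0}^{i-1}h_{i,k}g_k$, where $g_k$ is the (sub)gradient returned by the first-order oracle at $x_k$. Let $I=\{0,1,\dots,N,*\}$. The quantity $w^{(d)}_{\mu,L}(R,H,N,b,C)$ is the supremum of $b^{\top}(f_0,\dots,f_N)^{\top}+\mathrm{Tr}(CG)$ over all collections $\{(x_i,g_i,f_i)\}_{i\in I}\subset\mathbb{R}^d\times\mathbb{R}^d\times\mathbb{R}$ such that: the collection is $\mathcal{F}_{\mu,L}$-interpolable; $(x_*,g_*,f_* )=(0,0,0)$; $x_i=x_0-\sum_{k=0}^{i-1}h_{i,k}g_k$ for $i=1,\dots,N$; and $\|x_0-x_*\|_2\le R$. Here $G=P^{\top}P\in\mathbb{S}^{N+2}$ with $P=[g_0\ g_1\ \cdots\ g_N\ x_0]\in\mathbb{R}^{d\times(N+2)}$. (Thus $x_*$ is a minimizer with optimal value $0$, and $w^{(d)}$ is the worst case of the criterion over $\mathcal{F}_{\mu,L}(\mathbb{R}^d)$ and starting points within distance $R$ of a minimizer.) Semidefinite program: let $e_1,\dots,e_{N+2}$ be the standard basis of $\mathbb{R}^{N+2}$. For $i=0,\dots,N$ let $h_i=(-h_{i,0},\dots,-h_{i,i-1},0,\dots,0,1)^{\top}\in\mathbb{R}^{N+2}$ (last entry $1$) and $u_i=e_{i+1}$; let $h_*=u_*=0$. For $i,j\in I$ define the symmetric matrix $A_{ij}$ by $2A_{ij}=\frac{L}{L-\mu}\big(u_j(h_i-h_j)^{\top}+(h_i-h_j)u_j^{\top}\big)+\frac{1}{L-\mu}(u_i-u_j)(u_i-u_j)^{\top}+\frac{\mu}{L-\mu}\big(u_i(h_j-h_i)^{\top}+(h_j-h_i)u_i^{\top}\big)+\frac{L\mu}{L-\mu}(h_i-h_j)(h_i-h_j)^{\top}$,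 where for $L=+\infty$ the coefficients are taken as $\frac{L}{L-\mu}=1$, $\frac{1}{L-\mu}=0$, $\frac{\mu}{L-\mu}=0$, $\frac{L\mu}{L-\mu}=\mu$; and $A_R=e_{N+2}e_{N+2}^{\top}$. Then $w^{sdp}_{\mu,L}(R,H,N,b,C)$ is the supremum of $b^{\top}f+\mathrm{Tr}(CG)$ over $G\in\mathbb{S}^{N+2}$, $f=(f_0,\dots,f_N)\in\mathbb{R}^{N+1}$ subject to $f_j-f_i+\mathrm{Tr}(GA_{ij})\le0$ for all $i,j\in I$ (with $f_*:=0$), $\mathrm{Tr}(GA_R)\le R^2$, and $G\succeq0$. *)

theory Defs
  imports "HOL-Analysis.Analysis"
begin

definition epigraph :: "('a::euclidean_space \<Rightarrow> ereal) \<Rightarrow> ('a \<times> real) set" where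
  "epigraph f = {(x, r). f x \<le> ereal r}"

definition subdiff :: "('a::euclidean_space \<Rightarrow> ereal) \<Rightarrow> 'a \<Rightarrow> 'a set" where
  "subdiff f x = {g. f x \<noteq> \<infinity> \<and> (\<forall>y. f x + ereal (inner g (y - x)) \<le> f y)}"

definition inv_L :: "ereal \<Rightarrow> real" where
  "inv_L L = (if L = \<infinity> then 0 else 1 / real_of_ereal L)"

definition FmuL :: "real \<Rightarrow> ereal \<Rightarrow> ('a::euclidean_space \<Rightarrow> ereal) set" where
  "FmuL \<mu> L = {f.
     (\<forall>x. f x \<noteq> -\<infinity>) \<and> (\<exists>x. f x \<noteq> \<infinity>) \<and>
     closed (epigraph f) \<and> convex (epigraph f) \<and>
     (\<forall>x1 x2 g1 g2. g1 \<in> subdiff f x1 \<longrightarrow> g2 \<in> subdiff f x2 \<longrightarrow>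
        inv_L L * norm (g1 - g2) \<le> norm (x1 - x2)) \<and>
     convex (epigraph (\<lambda>x. f x - ereal (\<mu> / 2 * (norm x)\<^sup>2)))}"

definition interpolable :: "real \<Rightarrow> ereal \<Rightarrow> ('a::euclidean_space \<times> 'a \<times> real) set \<Rightarrow> bool" where
  "interpolable \<mu> L S = (\<exists>f \<in> FmuL \<mu> L. \<forall>(x, g, v) \<in> S. f x = ereal v \<and> g \<in> subdiff f x)"

text \<open>Columns of P = [g_0 ... g_N x_0], indexed 0..N+1.\<close>
definition Pcol :: "nat \<Rightarrow> (nat \<Rightarrow> 'a::euclidean_space) \<Rightarrow> (nat \<Rightarrow> 'a) \<Rightarrow> nat \<Rightarrow> 'a" where
  "Pcol N x g p = (if p \<le> N then g p else x 0)"

definition w_d :: "'a::euclidean_space itself \<Rightarrow> real \<Rightarrow> ereal \<Rightarrow> real \<Rightarrow> (nat \<Rightarrow> nat \<Rightarrow> real)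
    \<Rightarrow> nat \<Rightarrow> (nat \<Rightarrow> real) \<Rightarrow> (nat \<Rightarrow> nat \<Rightarrow> real) \<Rightarrow> ereal" where
  "w_d _ \<mu> L R h N b C = Sup { ereal ((\<Sum>i\<le>N. b i * fv i) +
        (\<Sum>p\<le>N+1. \<Sum>q\<le>N+1. C p q * inner (Pcol N x g q) (Pcol N x g p)))
     | (x :: nat \<Rightarrow> 'a) g fv.
       interpolable \<mu> L ({(x i, g i, fv i) | i. i \<le> N} \<union> {(0, 0, 0)}) \<and>
       (\<forall>i\<in>{1..N}. x i = x 0 - (\<Sum>k<i. h i k *\<^sub>R g k)) \<and>
       norm (x 0 - 0) \<le> R }"

text \<open>Index set I = {0..N} \<union> {*}, with * encoded as None. Vectors in R^(N+2) are
  indexed 0..N+1 (e_k of the paper is index k-1).\<close>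
definition Iset :: "nat \<Rightarrow> nat option set" where
  "Iset N = Some ` {..N} \<union> {None}"

definition hvec :: "(nat \<Rightarrow> nat \<Rightarrow> real) \<Rightarrow> nat \<Rightarrow> nat option \<Rightarrow> nat \<Rightarrow> real" where
  "hvec h N i p = (case i of None \<Rightarrow> 0
     | Some i \<Rightarrow> (if p = N + 1 then 1 else if p < i then - h i p else 0))"

definition uvec :: "nat option \<Rightarrow> nat \<Rightarrow> real" where
  "uvec i p = (case i of None \<Rightarrow> 0 | Some i \<Rightarrow> (if p = i then 1 else 0))"

definition coefL :: "real \<Rightarrow> ereal \<Rightarrow> real" where
  "coefL \<mu> L = (if L = \<infinity> then 1 else real_of_ereal L / (real_of_ereal L - \<mu>))"
definition coef1 :: "real \<Rightarrow> ereal \<Rightarrow> real" where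
  "coef1 \<mu> L = (if L = \<infinity> then 0 else 1 / (real_of_ereal L - \<mu>))"
definition coefmu :: "real \<Rightarrow> ereal \<Rightarrow> real" where
  "coefmu \<mu> L = (if L = \<infinity> then 0 else \<mu> / (real_of_ereal L - \<mu>))"
definition coefLmu :: "real \<Rightarrow> ereal \<Rightarrow> real" where
  "coefLmu \<mu> L = (if L = \<infinity> then \<mu> else real_of_ereal L * \<mu> / (real_of_ereal L - \<mu>))"

definition Amat :: "real \<Rightarrow> ereal \<Rightarrow> (nat \<Rightarrow> nat \<Rightarrow> real) \<Rightarrow> nat \<Rightarrow> nat option \<Rightarrow> nat option
    \<Rightarrow> nat \<Rightarrow> nat \<Rightarrow> real" where
  "Amat \<mu> L h N i j p q =
     (let hi = hvec h N i; hj = hvec h N j; ui = uvec i; uj = uvec j in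
      (coefL \<mu> L * (uj p * (hi q - hj q) + (hi p - hj p) * uj q)
       + coef1 \<mu> L * ((ui p - uj p) * (ui q - uj q))
       + coefmu \<mu> L * (ui p * (hj q - hi q) + (hj p - hi p) * ui q)
       + coefLmu \<mu> L * ((hi p - hj p) * (hi q - hj q))) / 2)"

definition AR :: "nat \<Rightarrow> nat \<Rightarrow> nat \<Rightarrow> real" where
  "AR N p q = (if p = N + 1 \<and> q = N + 1 then 1 else 0)"

definition trace_prod :: "nat \<Rightarrow> (nat \<Rightarrow> nat \<Rightarrow> real) \<Rightarrow> (nat \<Rightarrow> nat \<Rightarrow> real) \<Rightarrow> real" where
  "trace_prod N G A = (\<Sum>p\<le>N+1. \<Sum>q\<le>N+1. G p q * A q p)"

definition sym_mat :: "nat \<Rightarrow> (nat \<Rightarrow> nat \<Rightarrow> real) \<Rightarrow> bool" where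
  "sym_mat N G = (\<forall>p\<le>N+1. \<forall>q\<le>N+1. G p q = G q p)"

definition psd_mat :: "nat \<Rightarrow> (nat \<Rightarrow> nat \<Rightarrow> real) \<Rightarrow> bool" where
  "psd_mat N G = (sym_mat N G \<and>
     (\<forall>v :: nat \<Rightarrow> real. 0 \<le> (\<Sum>p\<le>N+1. \<Sum>q\<le>N+1. v p * G p q * v q)))"

definition fopt :: "(nat \<Rightarrow> real) \<Rightarrow> nat option \<Rightarrow> real" where
  "fopt fv i = (case i of None \<Rightarrow> 0 | Some i \<Rightarrow> fv i)"

definition w_sdp :: "real \<Rightarrow> ereal \<Rightarrow> real \<Rightarrow> (nat \<Rightarrow> nat \<Rightarrow> real)
    \<Rightarrow> nat \<Rightarrow> (nat \<Rightarrow> real) \<Rightarrow> (nat \<Rightarrow> nat \<Rightarrow> real) \<Rightarrow> ereal" where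
  "w_sdp \<mu> L R h N b C = Sup { ereal ((\<Sum>i\<le>N. b i * fv i) + trace_prod N C G)
     | G fv.
       (\<forall>i\<in>Iset N. \<forall>j\<in>Iset N.
          fopt fv j - fopt fv i + trace_prod N G (Amat \<mu> L h N i j) \<le> 0) \<and>
       trace_prod N G (AR N) \<le> R\<^sup>2 \<and>
       psd_mat N G }"

end

theory Submission
  imports Defs
begin

text \<open>Both suprema range over the same values once a feasible point of the worst-case problem is
  identified with its function values and the Gram matrix G = P^T P of P = [g_0 ... g_N x_0].
  Two facts make this identification exact.

  First, the interpolation theorem for F_{\<mu>,L}: finitely many triples (x_i, g_i, f_i) are interpolable
  iff every pair satisfies the interpolation inequality, which in terms of G reads
  f_j - f_i + Tr(G A_ij) \<le> 0. Necessity is the cocoercivity of f - \<mu>/2 |.|^2, a convex function with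
  (L - \<mu>)-Lipschitz gradient (for finite L a single subgradient already forces f to be finite and
  differentiable everywhere). Sufficiency is witnessed by an explicit interpolant: for L = \<infinity> the
  maximum of the quadratic minorants attached to the data, for finite L the Moreau envelope of a
  piecewise affine function, plus \<mu>/2 |.|^2.

  Second, a positive semidefinite matrix of order N + 2 is, by Cholesky factorization, the Gram
  matrix of N + 2 vectors of R^d as soon as d \<ge> N + 2, so every feasible point of the semidefinite
  program comes from a function.\<close>

lemma le_of_le_add_mult_pos:
  fixes a b c :: real
  assumes "\<And>t. 0 < t \<Longrightarrow> t \<le> 1 \<Longrightarrow> a \<le> c + t * b"
  shows "a \<le> c"
proof (rule tendsto_lowerbound)
  show "((\<lambda>t. c + t * b) \<longlongrightarrow> c) (at_right 0)"
    by (auto intro!: tendsto_eq_intros)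
  show "\<forall>\<^sub>F t in at_right 0. a \<le> c + t * b"
    using eventually_at_right_real[OF zero_less_one] by eventually_elim (use assms in auto)
qed simp

lemma le_of_le_add_divide_nat:
  fixes a b c :: real
  assumes "\<And>n::nat. n \<ge> 1 \<Longrightarrow> a \<le> c + b / real n"
  shows "a \<le> c"
proof (rule tendsto_lowerbound)
  show "(\<lambda>n. c + b / real n) \<longlonglongrightarrow> c"
    by (auto intro!: tendsto_eq_intros tendsto_divide_0 filterlim_at_top_imp_at_infinity filterlim_real_sequentially)
  show "\<forall>\<^sub>F n in sequentially. a \<le> c + b / real n"
    using eventually_ge_at_top[of "1::nat"] by eventually_elim (use assms in auto)
qed simp

lemma sum_lessThan_Suc_real: "(\<Sum>k<n. real (k + 1)) = real n * (real n + 1) / 2"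
  by (induction n) (simp_all add: field_simps)

lemma norm_add_square:
  fixes x y :: "'a::real_inner"
  shows "(norm (x + y))\<^sup>2 = (norm x)\<^sup>2 + 2 * inner x y + (norm y)\<^sup>2"
  by (simp add: power2_norm_eq_inner inner_add_left inner_add_right inner_commute)

lemma norm_diff_square:
  fixes x y :: "'a::real_inner"
  shows "(norm (x - y))\<^sup>2 = (norm x)\<^sup>2 - 2 * inner x y + (norm y)\<^sup>2"
  by (simp add: power2_norm_eq_inner inner_diff_left inner_diff_right inner_commute)

lemma half_norm_square_expand:
  fixes x y :: "'a::real_inner"
  shows "c / 2 * (norm y)\<^sup>2 = c / 2 * (norm x)\<^sup>2 + c * inner x (y - x) + c / 2 * (norm (y - x))\<^sup>2"
proof -
  define d where "d = y - x"
  have "(norm y)\<^sup>2 = (norm x)\<^sup>2 + 2 * inner x d + (norm d)\<^sup>2"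
    using norm_add_square[of x d] by (simp add: d_def)
  then show ?thesis unfolding d_def[symmetric] by (simp add: algebra_simps)
qed

lemma convex_epigraph_ereal_iff:
  fixes F :: "'a::euclidean_space \<Rightarrow> real"
  shows "convex (epigraph (\<lambda>x. ereal (F x))) \<longleftrightarrow> convex_on UNIV F"
proof -
  \<comment> \<open>the epigraph of Defs shadows the library's epigraph of real-valued functions\<close>
  have "Defs.epigraph (\<lambda>x. ereal (F x)) = Convex.epigraph UNIV F"
    by (auto simp: Defs.epigraph_def Convex.epigraph_def)
  thus ?thesis by (simp add: convex_epigraph)
qed

lemma closed_epigraph_ereal:
  fixes F :: "'a::euclidean_space \<Rightarrow> real"
  assumes "continuous_on UNIV F"
  shows "closed (epigraph (\<lambda>x. ereal (F x)))"
proof -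
  have "epigraph (\<lambda>x. ereal (F x)) = {p. F (fst p) \<le> snd p}" by (auto simp: epigraph_def)
  moreover have "continuous_on UNIV (\<lambda>p::'a \<times> real. F (fst p))"
    by (rule continuous_on_compose2[OF assms continuous_on_fst[OF continuous_on_id]]) auto
  then have "closed {p::'a \<times> real. F (fst p) \<le> snd p}"
    by (rule closed_Collect_le) (intro continuous_intros)
  ultimately show ?thesis by simp
qed

lemma convex_epigraphD:
  fixes f :: "'a::euclidean_space \<Rightarrow> ereal"
  assumes "convex (epigraph f)" "f x = ereal a" "f y = ereal b" "0 \<le> t" "t \<le> 1"
  shows "f ((1 - t) *\<^sub>R x + t *\<^sub>R y) \<le> ereal ((1 - t) * a + t * b)"
proof -
  have "(x, a) \<in> epigraph f" "(y, b) \<in> epigraph f" using assms by (auto simp: epigraph_def)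
  from convexD[OF assms(1) this, of "1 - t" t] assms(4,5)
  have "(1 - t) *\<^sub>R (x, a) + t *\<^sub>R (y, b) \<in> epigraph f" by simp
  thus ?thesis by (simp add: epigraph_def)
qed

lemma convex_on_if_subgradients:
  fixes F :: "'a::real_inner \<Rightarrow> real"
  assumes "\<And>x y. F x + inner (s x) (y - x) \<le> F y"
  shows "convex_on UNIV F"
proof (rule convex_onI)
  fix t :: real and x y :: 'a
  assume t: "0 < t" "t < 1"
  define w where "w = (1 - t) *\<^sub>R x + t *\<^sub>R y"
  have "(1 - t) * (F w + inner (s w) (x - w)) + t * (F w + inner (s w) (y - w)) \<le> (1 - t) * F x + t * F y"
    using assms t by (intro add_mono mult_left_mono) auto
  moreover have "(1 - t) *\<^sub>R (x - w) + t *\<^sub>R (y - w) = 0" unfolding w_def by (simp add: algebra_simps)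
  then have "(1 - t) * inner (s w) (x - w) + t * inner (s w) (y - w) = 0"
    by (metis inner_add_right inner_scaleR_right inner_zero_right)
  ultimately show "F w \<le> (1 - t) * F x + t * F y" by (simp add: algebra_simps)
qed simp

lemma convex_on_max:
  assumes f: "convex_on C f" and g: "convex_on C g"
  shows "convex_on C (\<lambda>x. max (f x) (g x))"
proof -
  have "max (f (u *\<^sub>R x + v *\<^sub>R y)) (g (u *\<^sub>R x + v *\<^sub>R y)) \<le> u * max (f x) (g x) + v * max (f y) (g y)"
    if "x \<in> C" "y \<in> C" "0 \<le> u" "0 \<le> v" "u + v = 1" for x y u v
  proof (rule max.boundedI)
    have "f (u *\<^sub>R x + v *\<^sub>R y) \<le> u * f x + v * f y" using f that unfolding convex_on_def by blast
    also have "\<dots> \<le> u * max (f x) (g x) + v * max (f y) (g y)"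
      using that by (intro add_mono mult_left_mono) simp_all
    finally show "f (u *\<^sub>R x + v *\<^sub>R y) \<le> u * max (f x) (g x) + v * max (f y) (g y)" .
    have "g (u *\<^sub>R x + v *\<^sub>R y) \<le> u * g x + v * g y" using g that unfolding convex_on_def by blast
    also have "\<dots> \<le> u * max (f x) (g x) + v * max (f y) (g y)"
      using that by (intro add_mono mult_left_mono) simp_all
    finally show "g (u *\<^sub>R x + v *\<^sub>R y) \<le> u * max (f x) (g x) + v * max (f y) (g y)" .
  qed
  with f show ?thesis unfolding convex_on_def by blast
qed

lemma convex_on_Max_image:
  assumes "finite S" "S \<noteq> {}" and "\<And>s. s \<in> S \<Longrightarrow> convex_on C (A s)"
  shows "convex_on C (\<lambda>z. Max ((\<lambda>s. A s z) ` S))"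
  using assms
proof (induction S rule: finite_ne_induct)
  case (insert s S)
  then have eq: "(\<lambda>z. Max ((\<lambda>s. A s z) ` insert s S)) = (\<lambda>z. max (A s z) (Max ((\<lambda>s. A s z) ` S)))"
    by auto
  have "convex_on C (\<lambda>z. max (A s z) (Max ((\<lambda>s. A s z) ` S)))"
    using insert by (intro convex_on_max) auto
  with eq show ?case by (simp only:)
qed auto

lemma continuous_on_Max_image:
  fixes A :: "'s \<Rightarrow> 'a::topological_space \<Rightarrow> real"
  assumes "finite S" "S \<noteq> {}" and "\<And>s. s \<in> S \<Longrightarrow> continuous_on C (A s)"
  shows "continuous_on C (\<lambda>z. Max ((\<lambda>s. A s z) ` S))"
  using assms
proof (induction S rule: finite_ne_induct)
  case (insert s S)
  then have eq: "(\<lambda>z. Max ((\<lambda>s. A s z) ` insert s S)) = (\<lambda>z. max (A s z) (Max ((\<lambda>s. A s z) ` S)))"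
    by auto
  have "continuous_on C (\<lambda>z. max (A s z) (Max ((\<lambda>s. A s z) ` S)))"
    using insert by (intro continuous_on_max) auto
  with eq show ?case by (simp only:)
qed auto

lemma convex_on_affine:
  fixes a :: "'a::real_inner"
  shows "convex_on UNIV (\<lambda>z. c + inner a z)"
  by (rule convex_onI) (simp_all add: inner_add_right algebra_simps)

lemma convex_on_scaled_norm_square:
  assumes "0 \<le> \<mu>"
  shows "convex_on UNIV (\<lambda>x::'a::real_inner. \<mu> / 2 * (norm x)\<^sup>2)"
proof (rule convex_onI)
  fix t :: real and x y :: 'a
  assume t: "0 < t" "t < 1"
  have "(norm ((1 - t) *\<^sub>R x + t *\<^sub>R y))\<^sup>2 = (1 - t) * (norm x)\<^sup>2 + t * (norm y)\<^sup>2 - t * (1 - t) * (norm (x - y))\<^sup>2"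
    by (simp add: power2_norm_eq_inner inner_add_left inner_add_right inner_diff_left inner_diff_right
        inner_commute algebra_simps)
  moreover have "0 \<le> t * (1 - t) * (norm (x - y))\<^sup>2" using t by simp
  ultimately have "(norm ((1 - t) *\<^sub>R x + t *\<^sub>R y))\<^sup>2 \<le> (1 - t) * (norm x)\<^sup>2 + t * (norm y)\<^sup>2" by linarith
  then have "\<mu> / 2 * (norm ((1 - t) *\<^sub>R x + t *\<^sub>R y))\<^sup>2 \<le> \<mu> / 2 * ((1 - t) * (norm x)\<^sup>2 + t * (norm y)\<^sup>2)"
    using assms by (intro mult_left_mono) auto
  also have "\<mu> / 2 * ((1 - t) * (norm x)\<^sup>2 + t * (norm y)\<^sup>2) = (1 - t) * (\<mu> / 2 * (norm x)\<^sup>2) + t * (\<mu> / 2 * (norm y)\<^sup>2)"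
    by (simp add: field_simps)
  finally show "\<mu> / 2 * (norm ((1 - t) *\<^sub>R x + t *\<^sub>R y))\<^sup>2 \<le> (1 - t) * (\<mu> / 2 * (norm x)\<^sup>2) + t * (\<mu> / 2 * (norm y)\<^sup>2)" .
qed simp

section \<open>Subgradients of closed convex functions\<close>

lemma strongly_convex_subgradient_ineq:
  fixes f :: "'a::euclidean_space \<Rightarrow> ereal"
  assumes cv: "convex (epigraph (\<lambda>x. f x - ereal (\<mu> / 2 * (norm x)\<^sup>2)))"
    and fx: "f x = ereal vx" and fy: "f y = ereal vy" and g: "g \<in> subdiff f y"
  shows "vy + inner g (x - y) + \<mu> / 2 * (norm (x - y))\<^sup>2 \<le> vx"
proof -
  define q where "q z = \<mu> / 2 * (norm z)\<^sup>2" for z :: 'a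
  define d where "d = x - y"
  have "inner g d + \<mu> / 2 * (norm d)\<^sup>2 \<le> vx - vy + t * (\<mu> / 2 * (norm d)\<^sup>2)"
    if t: "0 < t" "t \<le> 1" for t
  proof -
    define w where "w = (1 - t) *\<^sub>R y + t *\<^sub>R x"
    have "(\<lambda>x. f x - ereal (q x)) w \<le> ereal ((1 - t) * (vy - q y) + t * (vx - q x))"
      using convex_epigraphD[OF cv[folded q_def], of y "vy - q y" x "vx - q x" t] fx fy t
      by (simp add: w_def)
    then have upper: "f w - ereal (q w) \<le> ereal ((1 - t) * (vy - q y) + t * (vx - q x))" by simp
    have lower: "f y + ereal (inner g (w - y)) \<le> f w" using g unfolding subdiff_def by auto
    then obtain fw where fw: "f w = ereal fw"
      using upper fy by (cases "f w") auto
    have wy: "w - y = t *\<^sub>R d" unfolding w_def d_def by (simp add: algebra_simps)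
    have qw: "q w = q y + \<mu> * t * inner y d + \<mu> / 2 * t\<^sup>2 * (norm d)\<^sup>2"
    proof -
      have "w = y + t *\<^sub>R d" using wy by (simp add: algebra_simps)
      thus ?thesis unfolding q_def by (simp add: norm_add_square power_mult_distrib algebra_simps)
    qed
    have qx: "q x = q y + \<mu> * inner y d + \<mu> / 2 * (norm d)\<^sup>2"
    proof -
      have "x = y + d" unfolding d_def by simp
      thus ?thesis unfolding q_def by (simp add: norm_add_square algebra_simps inner_commute)
    qed
    have "t * (inner g d) \<le> t * (vx - vy) - t * (\<mu> / 2 * (norm d)\<^sup>2) + t * (t * (\<mu> / 2 * (norm d)\<^sup>2))"
      using upper lower fy fw wy qw qx by (simp add: algebra_simps power2_eq_square)
    then have "t * (inner g d + \<mu> / 2 * (norm d)\<^sup>2) \<le> t * (vx - vy + t * (\<mu> / 2 * (norm d)\<^sup>2))"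
      by (simp add: algebra_simps)
    thus ?thesis using t by simp
  qed
  then have "inner g d + \<mu> / 2 * (norm d)\<^sup>2 \<le> vx - vy"
    by (rule le_of_le_add_mult_pos)
  thus ?thesis unfolding d_def by simp
qed

lemma subgradient_at_prox_point:
  fixes f :: "'a::euclidean_space \<Rightarrow> ereal"
  assumes cv: "convex (epigraph f)" and fm: "f m = ereal vm"
    and min: "\<And>z. f m + ereal (c / 2 * (norm (y - m))\<^sup>2) \<le> f z + ereal (c / 2 * (norm (y - z))\<^sup>2)"
  shows "c *\<^sub>R (y - m) \<in> subdiff f m"
proof -
  have "f m + ereal (inner (c *\<^sub>R (y - m)) (u - m)) \<le> f u" for u
  proof (cases "f u")
    case PInf thus ?thesis using fm by simp
  next
    case MInf thus ?thesis using min[of u] fm by simp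
  next
    case (real vu)
    define e where "e = y - m"
    define d where "d = u - m"
    have "vm + c * inner e d \<le> vu + t * (c / 2 * (norm d)\<^sup>2)" if t: "0 < t" "t \<le> 1" for t
    proof -
      define w where "w = (1 - t) *\<^sub>R m + t *\<^sub>R u"
      have upper: "f w \<le> ereal ((1 - t) * vm + t * vu)"
        using convex_epigraphD[OF cv fm real, of t] t by (simp add: w_def)
      have lower: "f m + ereal (c / 2 * (norm (y - m))\<^sup>2) \<le> f w + ereal (c / 2 * (norm (y - w))\<^sup>2)"
        by (rule min)
      obtain fw where fw: "f w = ereal fw" using upper lower fm by (cases "f w") auto
      have "y - w = e - t *\<^sub>R d" unfolding w_def e_def d_def by (simp add: algebra_simps)
      then have yw: "(norm (y - w))\<^sup>2 = (norm e)\<^sup>2 - 2 * t * inner e d + t\<^sup>2 * (norm d)\<^sup>2"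
        by (simp add: norm_diff_square power_mult_distrib)
      have "c / 2 * (norm (y - w))\<^sup>2 = c / 2 * (norm e)\<^sup>2 - t * (c * inner e d) + t * (t * (c / 2 * (norm d)\<^sup>2))"
        unfolding yw by (simp add: algebra_simps power2_eq_square)
      with upper lower fw fm have "t * (vm + c * inner e d) \<le> t * (vu + t * (c / 2 * (norm d)\<^sup>2))"
        by (simp add: algebra_simps e_def)
      thus ?thesis using t by simp
    qed
    then have "vm + c * inner e d \<le> vu" by (rule le_of_le_add_mult_pos)
    thus ?thesis using fm real by (simp add: e_def d_def)
  qed
  thus ?thesis unfolding subdiff_def using fm by auto
qed

lemma le_of_quadratic_le_linear:
  fixes s a b c :: real
  assumes "c > 0" "0 \<le> a" "0 \<le> b" "0 \<le> s" and "c / 2 * s\<^sup>2 \<le> a + b * s"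
  shows "s \<le> 1 + 2 * (a + b) / c"
proof (cases "s \<le> 1")
  case True thus ?thesis using assms by (simp add: add_increasing2)
next
  case False
  then have "c / 2 * (s * s) \<le> (a + b) * s"
    using assms mult_left_mono[of 1 s a] by (simp add: power2_eq_square algebra_simps)
  then have "c / 2 * s \<le> a + b" using False by (simp add: mult.assoc[symmetric] mult_le_cancel_right)
  then have "s \<le> 2 * (a + b) / c" using assms(1) by (simp add: field_simps)
  thus ?thesis by simp
qed

lemma compact_prox_sublevel:
  fixes f :: "'a::euclidean_space \<Rightarrow> ereal"
  assumes cl: "closed (epigraph f)" and minorant: "\<And>z. ereal (\<alpha> + inner \<gamma> z) \<le> f z" and c: "c > 0"
  shows "compact (epigraph f \<inter> {p. snd p + c / 2 * (norm (y - fst p))\<^sup>2 \<le> r0})"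
    (is "compact ?K")
proof -
  define k where "k = \<bar>r0 - \<alpha> - inner \<gamma> y\<bar>"
  define \<rho> where "\<rho> = 1 + 2 * (k + norm \<gamma>) / c"
  have bounds: "norm (z - y) \<le> \<rho> \<and> \<alpha> + inner \<gamma> y - norm \<gamma> * \<rho> \<le> r \<and> r \<le> r0"
    if zr: "(z, r) \<in> ?K" for z r
  proof -
    have "f z \<le> ereal r" using zr by (simp add: epigraph_def)
    then have "ereal (\<alpha> + inner \<gamma> z) \<le> ereal r" using minorant[of z] by (rule order_trans[rotated])
    then have r_lower: "\<alpha> + inner \<gamma> z \<le> r" by simp
    have r_upper: "r + c / 2 * (norm (z - y))\<^sup>2 \<le> r0"
      using zr by (simp add: norm_minus_commute)
    have ip: "\<bar>inner \<gamma> (z - y)\<bar> \<le> norm \<gamma> * norm (z - y)" by (rule Cauchy_Schwarz_ineq2)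
    have "r0 - \<alpha> - inner \<gamma> y \<le> k" unfolding k_def by simp
    then have quad: "c / 2 * (norm (z - y))\<^sup>2 \<le> k + norm \<gamma> * norm (z - y)"
      using r_lower r_upper ip unfolding inner_diff_right abs_le_iff by linarith
    have nz: "norm (z - y) \<le> \<rho>"
      unfolding \<rho>_def using le_of_quadratic_le_linear[OF c _ _ _ quad] by (simp add: k_def)
    have "norm \<gamma> * norm (z - y) \<le> norm \<gamma> * \<rho>" using nz by (simp add: mult_left_mono)
    with r_lower ip have "\<alpha> + inner \<gamma> y - norm \<gamma> * \<rho> \<le> r"
      unfolding inner_diff_right abs_le_iff by linarith
    moreover have "0 \<le> c / 2 * (norm (z - y))\<^sup>2" using c by simp
    then have "r \<le> r0" using r_upper by linarith
    ultimately show ?thesis using nz by simp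
  qed
  have "?K \<subseteq> cball y \<rho> \<times> {\<alpha> + inner \<gamma> y - norm \<gamma> * \<rho>..r0}"
  proof
    fix p assume "p \<in> ?K"
    moreover obtain z r where "p = (z, r)" by (cases p)
    ultimately show "p \<in> cball y \<rho> \<times> {\<alpha> + inner \<gamma> y - norm \<gamma> * \<rho>..r0}"
      using bounds[of z r] by (simp add: dist_norm norm_minus_commute)
  qed
  then have "(cball y \<rho> \<times> {\<alpha> + inner \<gamma> y - norm \<gamma> * \<rho>..r0}) \<inter> ?K = ?K" by blast
  moreover have "closed ?K" by (intro closed_Int cl closed_Collect_le continuous_intros)
  then have "compact ((cball y \<rho> \<times> {\<alpha> + inner \<gamma> y - norm \<gamma> * \<rho>..r0}) \<inter> ?K)"
    by (intro compact_Int_closed compact_Times compact_cball compact_Icc)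
  ultimately show ?thesis by simp
qed

lemma prox_point_exists:
  fixes f :: "'a::euclidean_space \<Rightarrow> ereal"
  assumes cl: "closed (epigraph f)" and fa: "f a = ereal va"
    and minorant: "\<And>z. ereal (\<alpha> + inner \<gamma> z) \<le> f z" and c: "c > 0"
  shows "\<exists>m vm. f m = ereal vm \<and>
     (\<forall>z. f m + ereal (c / 2 * (norm (y - m))\<^sup>2) \<le> f z + ereal (c / 2 * (norm (y - z))\<^sup>2))"
proof -
  define Q where "Q p = snd p + c / 2 * (norm (y - fst p))\<^sup>2" for p :: "'a \<times> real"
  define K where "K = epigraph f \<inter> {p. Q p \<le> Q (a, va)}"
  have "compact K"
    unfolding K_def Q_def by (rule compact_prox_sublevel[OF cl minorant c])
  moreover have "(a, va) \<in> K" using fa by (simp add: K_def epigraph_def)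
  moreover have "continuous_on K Q" unfolding Q_def by (intro continuous_intros)
  ultimately obtain m rm where mK: "(m, rm) \<in> K" and mmin: "\<And>p. p \<in> K \<Longrightarrow> Q (m, rm) \<le> Q p"
    using continuous_attains_inf[of K Q] by fastforce
  have "f m \<le> ereal rm" using mK by (simp add: K_def epigraph_def)
  moreover have "ereal (\<alpha> + inner \<gamma> m) \<le> f m" by (rule minorant)
  ultimately obtain vm where fm: "f m = ereal vm" and vm: "vm \<le> rm" by (cases "f m") auto
  have "f m + ereal (c / 2 * (norm (y - m))\<^sup>2) \<le> f z + ereal (c / 2 * (norm (y - z))\<^sup>2)" for z
  proof (cases "f z")
    case (real vz)
    show ?thesis
    proof (cases "Q (z, vz) \<le> Q (a, va)")
      case True
      then have "(z, vz) \<in> K" using real by (simp add: K_def epigraph_def)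
      from mmin[OF this] show ?thesis using fm real vm by (simp add: Q_def)
    next
      case False thus ?thesis using fm real vm mK by (simp add: K_def Q_def)
    qed
  qed (use fm minorant[of z] in simp_all)
  thus ?thesis using fm by blast
qed

lemma Cauchy_if_dist_le_mult:
  fixes a :: "nat \<Rightarrow> 'a::metric_space" and p :: "nat \<Rightarrow> 'b::metric_space"
  assumes "Cauchy p" and "\<And>m n. dist (a m) (a n) \<le> B * dist (p m) (p n)"
  shows "Cauchy a"
proof (rule metric_CauchyI)
  fix e :: real assume e: "e > 0"
  define B' where "B' = max B 1"
  have B': "B' > 0" "B \<le> B'" by (simp_all add: B'_def)
  obtain M where M: "\<And>m n. m \<ge> M \<Longrightarrow> n \<ge> M \<Longrightarrow> dist (p m) (p n) < e / B'"
    using metric_CauchyD[OF assms(1), of "e / B'"] e B' by auto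
  have "dist (a m) (a n) < e" if "m \<ge> M" "n \<ge> M" for m n
  proof -
    have "dist (a m) (a n) \<le> B' * dist (p m) (p n)"
      using assms(2)[of m n] B' by (meson mult_right_mono order_trans zero_le_dist)
    also have "\<dots> < e" using M[OF that] B' by (simp add: field_simps)
    finally show ?thesis .
  qed
  then show "\<exists>M. \<forall>m\<ge>M. \<forall>n\<ge>M. dist (a m) (a n) < e" by blast
qed

lemma subgradient_value_diff_le:
  fixes f :: "'a::euclidean_space \<Rightarrow> ereal"
  assumes "g1 \<in> subdiff f x1" "g2 \<in> subdiff f x2" "f x1 = ereal v1" "f x2 = ereal v2"
    and "norm g1 \<le> B" "norm g2 \<le> B"
  shows "\<bar>v1 - v2\<bar> \<le> B * dist x1 x2"
proof -
  have inner_bound: "\<bar>inner g (x - y)\<bar> \<le> B * dist x y" if "norm g \<le> B" for g x y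
  proof -
    have "\<bar>inner g (x - y)\<bar> \<le> norm g * norm (x - y)" by (rule Cauchy_Schwarz_ineq2)
    also have "\<dots> \<le> B * norm (x - y)" using that by (rule mult_right_mono) simp
    finally show ?thesis by (simp add: dist_norm)
  qed
  have "f x2 + ereal (inner g2 (x1 - x2)) \<le> f x1" "f x1 + ereal (inner g1 (x2 - x1)) \<le> f x2"
    using assms(1,2) unfolding subdiff_def by blast+
  then have "v2 + inner g2 (x1 - x2) \<le> v1" "v1 + inner g1 (x2 - x1) \<le> v2"
    using assms(3,4) by simp_all
  moreover have "\<bar>inner g2 (x1 - x2)\<bar> \<le> B * dist x1 x2" "\<bar>inner g1 (x2 - x1)\<bar> \<le> B * dist x1 x2"
    using inner_bound[of g2 x1 x2] inner_bound[of g1 x2 x1] assms(5,6) by (simp_all add: dist_commute)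
  ultimately show ?thesis by (simp only: abs_le_iff) linarith
qed

lemma subgradient_of_limits:
  fixes f :: "'a::euclidean_space \<Rightarrow> ereal"
  assumes cl: "closed (epigraph f)" and no_MInf: "\<And>x. f x \<noteq> -\<infinity>"
    and sub: "\<And>n. \<gamma> n \<in> subdiff f (p n)" and val: "\<And>n. f (p n) = ereal (v n)"
    and lim: "p \<longlonglongrightarrow> l" "\<gamma> \<longlonglongrightarrow> \<gamma>l" "v \<longlonglongrightarrow> vl"
  shows "\<gamma>l \<in> subdiff f l"
proof -
  have "(\<lambda>n. (p n, v n)) \<longlonglongrightarrow> (l, vl)" using lim by (intro tendsto_Pair)
  moreover have "(p n, v n) \<in> epigraph f" for n using val by (simp add: epigraph_def)
  ultimately have "(l, vl) \<in> epigraph f" using closed_sequentially[OF cl, of "\<lambda>n. (p n, v n)"] by blast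
  then have fl: "f l \<le> ereal vl" by (simp add: epigraph_def)
  have "f l + ereal (inner \<gamma>l (z - l)) \<le> f z" for z
  proof (cases "f z")
    case (real vz)
    have "f (p n) + ereal (inner (\<gamma> n) (z - p n)) \<le> f z" for n
      using sub[of n] unfolding subdiff_def by blast
    then have "v n + inner (\<gamma> n) (z - p n) \<le> vz" for n using val real by simp
    moreover have "(\<lambda>n. v n + inner (\<gamma> n) (z - p n)) \<longlonglongrightarrow> vl + inner \<gamma>l (z - l)"
      using lim by (intro tendsto_intros)
    ultimately have "vl + inner \<gamma>l (z - l) \<le> vz" by (meson LIMSEQ_le_const2)
    then have "ereal vl + ereal (inner \<gamma>l (z - l)) \<le> f z" using real by simp
    moreover have "f l + ereal (inner \<gamma>l (z - l)) \<le> ereal vl + ereal (inner \<gamma>l (z - l))"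
      using fl by (rule add_right_mono)
    ultimately show ?thesis by (rule order_trans[rotated])
  qed (use no_MInf in simp_all)
  moreover have "f l \<noteq> \<infinity>" using fl by auto
  ultimately show ?thesis unfolding subdiff_def by simp
qed

lemma descent_lemma:
  fixes F :: "'a::real_inner \<Rightarrow> real"
  assumes sub: "\<And>x y. F x + inner (s x) (y - x) \<le> F y"
    and lip: "\<And>x y. norm (s x - s y) \<le> L * norm (x - y)"
  shows "F (y + d) \<le> F y + inner (s y) d + L / 2 * (norm d)\<^sup>2"
proof -
  define D where "D = (norm d)\<^sup>2"
  have "F (y + d) - F y - inner (s y) d \<le> L / 2 * D + (L / 2 * D) / real n" if n: "n \<ge> 1" for n :: nat
  proof -
    define pt where "pt k = y + (real k / real n) *\<^sub>R d" for k :: nat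
    have npos: "real n > 0" using n by simp
    have step: "F (pt (Suc k)) - F (pt k) \<le> (inner (s y) d + L * (real (k + 1) / real n) * D) / real n" for k
    proof -
      have "pt (Suc k) = pt k + (1 / real n) *\<^sub>R d" unfolding pt_def
        by (simp add: add_divide_distrib scaleR_add_left)
      then have "F (pt (Suc k)) - F (pt k) \<le> inner (s (pt (Suc k))) d / real n"
        using sub[of "pt (Suc k)" "pt k"] by (simp add: inner_minus_right)
      also have "inner (s (pt (Suc k))) d \<le> inner (s y) d + norm (s (pt (Suc k)) - s y) * norm d"
        using Cauchy_Schwarz_ineq2[of "s (pt (Suc k)) - s y" d] by (simp add: inner_diff_left)
      also have "\<dots> \<le> inner (s y) d + L * norm (pt (Suc k) - y) * norm d"
        using lip[of "pt (Suc k)" y] by (simp add: mult_right_mono)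
      also have "norm (pt (Suc k) - y) = real (k + 1) / real n * norm d" unfolding pt_def using npos by simp
      finally show ?thesis
        using npos unfolding D_def by (simp add: divide_right_mono power2_eq_square mult.assoc)
    qed
    have "(\<Sum>k<n. F (pt (Suc k)) - F (pt k)) = F (pt n) - F (pt 0)"
      by (rule sum_lessThan_telescope)
    moreover have "pt n = y + d" "pt 0 = y" unfolding pt_def using npos by auto
    ultimately have "F (y + d) - F y = (\<Sum>k<n. F (pt (Suc k)) - F (pt k))" by simp
    also have "\<dots> \<le> (\<Sum>k<n. inner (s y) d / real n + L * D / (real n * real n) * real (k + 1))"
      using step npos by (intro sum_mono) (simp add: field_simps)
    also have "\<dots> = (\<Sum>k<n. inner (s y) d / real n) + L * D / (real n * real n) * (\<Sum>k<n. real (k + 1))"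
      by (simp only: sum.distrib sum_distrib_left)
    also have "(\<Sum>k<n. inner (s y) d / real n) = inner (s y) d"
      using npos by simp
    also have "(\<Sum>k<n. real (k + 1)) = real n * (real n + 1) / 2"
      by (rule sum_lessThan_Suc_real)
    also have "L * D / (real n * real n) * (real n * (real n + 1) / 2) = L / 2 * D + (L / 2 * D) / real n"
      using npos by (simp add: field_simps)
    finally show ?thesis by linarith
  qed
  then have "F (y + d) - F y - inner (s y) d \<le> L / 2 * D"
    by (rule le_of_le_add_divide_nat)
  thus ?thesis unfolding D_def by simp
qed

lemma cocoercivity_if_descent:
  fixes H :: "'a::real_inner \<Rightarrow> real"
  assumes M: "M > 0"
    and sub: "\<And>w z. H w + inner (a w) (z - w) \<le> H z"
    and descent: "\<And>w d. H (w + d) \<le> H w + inner (a w) d + M / 2 * (norm d)\<^sup>2"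
  shows "H xj + inner (a xj) (xi - xj) + 1 / (2 * M) * (norm (a xi - a xj))\<^sup>2 \<le> H xi"
proof -
  define e where "e = a xi - a xj"
  define d where "d = - ((1 / M) *\<^sub>R e)"
  have "H xj + inner (a xj) (xi + d - xj) \<le> H (xi + d)" by (rule sub)
  also have "\<dots> \<le> H xi + inner (a xi) d + M / 2 * (norm d)\<^sup>2" by (rule descent)
  finally have "H xj + inner (a xj) (xi - xj) + (inner (a xj) d - inner (a xi) d) - M / 2 * (norm d)\<^sup>2 \<le> H xi"
    by (simp add: inner_add_right inner_diff_right)
  moreover have "inner (a xj) d - inner (a xi) d = (norm e)\<^sup>2 / M"
    unfolding d_def e_def
    by (simp add: power2_norm_eq_inner inner_diff_left inner_diff_right inner_commute diff_divide_distrib add_divide_distrib)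
  moreover have "M / 2 * (norm d)\<^sup>2 = (norm e)\<^sup>2 / (2 * M)"
    unfolding d_def using M by (simp add: power_divide power2_eq_square)
  ultimately show ?thesis unfolding e_def[symmetric] using M by (simp add: field_simps)
qed

lemma subgradient_eq_if_quadratic_upper:
  fixes F :: "'a::real_inner \<Rightarrow> real"
  assumes K: "K > 0" and upper: "\<And>y. F y \<le> F x + inner s (y - x) + K * (norm (y - x))\<^sup>2"
    and lower: "\<And>y. F x + inner g (y - x) \<le> F y"
  shows "g = s"
proof -
  define y where "y = x + (1 / (2 * K)) *\<^sub>R (g - s)"
  have yx: "y - x = (1 / (2 * K)) *\<^sub>R (g - s)" unfolding y_def by simp
  have "inner (g - s) (y - x) \<le> K * (norm (y - x))\<^sup>2"
    using upper[of y] lower[of y] by (simp add: inner_diff_left)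
  then have "(norm (g - s))\<^sup>2 / (2 * K) \<le> K * ((norm (g - s))\<^sup>2 / (2 * K)\<^sup>2)"
    unfolding yx using K by (simp add: power2_norm_eq_inner power_mult_distrib power_divide)
  then have "(norm (g - s))\<^sup>2 \<le> 0" using K by (simp add: power2_eq_square field_simps)
  then show ?thesis by simp
qed

lemma norm_add_scaleR_le_if_cocoercive:
  fixes u w :: "'a::real_inner"
  assumes M: "M > 0" and \<mu>: "0 \<le> \<mu>" and coco: "(norm u)\<^sup>2 \<le> M * inner u w"
  shows "norm (u + \<mu> *\<^sub>R w) \<le> (M + \<mu>) * norm w"
proof -
  define c where "c = inner u w"
  have cs: "c \<le> norm u * norm w" unfolding c_def by (rule norm_cauchy_schwarz)
  have nu: "norm u \<le> M * norm w"
  proof (cases "norm u = 0")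
    case False
    have "(norm u)\<^sup>2 \<le> M * (norm u * norm w)"
      using order_trans[OF coco mult_left_mono[OF cs[unfolded c_def]]] M by simp
    then have "norm u * norm u \<le> norm u * (M * norm w)" by (simp add: power2_eq_square mult_ac)
    then show ?thesis using False by (simp add: mult_le_cancel_left_pos)
  qed (use M in simp)
  have "norm u * norm w \<le> M * norm w * norm w" using nu by (rule mult_right_mono) simp
  then have cM: "c \<le> M * (norm w)\<^sup>2" using cs by (simp add: power2_eq_square mult.assoc)
  have "(norm (u + \<mu> *\<^sub>R w))\<^sup>2 = (norm u)\<^sup>2 + 2 * (\<mu> * c) + \<mu>\<^sup>2 * (norm w)\<^sup>2"
    unfolding norm_add_square c_def by (simp add: power_mult_distrib)
  also have "\<dots> \<le> (M + 2 * \<mu>) * c + \<mu>\<^sup>2 * (norm w)\<^sup>2"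
    using coco unfolding c_def[symmetric] by (simp add: distrib_right)
  also have "\<dots> \<le> (M + 2 * \<mu>) * (M * (norm w)\<^sup>2) + \<mu>\<^sup>2 * (norm w)\<^sup>2"
    using cM M \<mu> by (intro add_right_mono mult_left_mono) auto
  also have "\<dots> = ((M + \<mu>) * norm w)\<^sup>2" by (simp add: power2_eq_square algebra_simps)
  finally show ?thesis by (rule power2_le_imp_le) (use M \<mu> in simp)
qed

section \<open>Interpolation conditions\<close>

text \<open>The F_{\<mu>,L}-interpolation inequality between two triples, written with the coefficients of
  A_ij, so that for a Gram matrix it is the constraint f_j - f_i + Tr(G A_ij) \<le> 0 of the semidefinite
  program (lemma interp_cond_pep_point_iff). For finite L it is the cocoercivity inequality of the data
  shifted by \<mu>/2 |.|^2 (lemma interp_cond_ereal_iff).\<close>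
definition interp_cond :: "real \<Rightarrow> ereal \<Rightarrow> ('a::euclidean_space \<times> 'a \<times> real) \<Rightarrow> ('a \<times> 'a \<times> real) \<Rightarrow> bool" where
  "interp_cond \<mu> L ti tj = (case ti of (xi, gi, vi) \<Rightarrow> case tj of (xj, gj, vj) \<Rightarrow>
     vj - vi + (coefL \<mu> L * inner gj (xi - xj) + coef1 \<mu> L / 2 * (norm (gi - gj))\<^sup>2
       + coefmu \<mu> L * inner gi (xj - xi) + coefLmu \<mu> L / 2 * (norm (xi - xj))\<^sup>2) \<le> 0)"

definition shifted_grad :: "real \<Rightarrow> ('a::real_vector \<times> 'a \<times> real) \<Rightarrow> 'a" where
  "shifted_grad \<mu> t = fst (snd t) - \<mu> *\<^sub>R fst t"

definition shifted_val :: "real \<Rightarrow> ('a::real_normed_vector \<times> 'a \<times> real) \<Rightarrow> real" where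
  "shifted_val \<mu> t = snd (snd t) - \<mu> / 2 * (norm (fst t))\<^sup>2"

lemma interp_cond_infinity_iff:
  "interp_cond \<mu> \<infinity> (xi, gi, vi) (xj, gj, vj) \<longleftrightarrow> vj + inner gj (xi - xj) + \<mu> / 2 * (norm (xi - xj))\<^sup>2 \<le> vi"
  unfolding interp_cond_def coefL_def coef1_def coefmu_def coefLmu_def by auto

lemma interp_cond_ereal_iff:
  fixes ti tj :: "'a::euclidean_space \<times> 'a \<times> real"
  assumes "\<mu> < L"
  shows "interp_cond \<mu> (ereal L) ti tj \<longleftrightarrow>
    shifted_val \<mu> tj + inner (shifted_grad \<mu> tj) (fst ti - fst tj)
      + 1 / (2 * (L - \<mu>)) * (norm (shifted_grad \<mu> ti - shifted_grad \<mu> tj))\<^sup>2 \<le> shifted_val \<mu> ti"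
proof -
  obtain xi gi vi xj gj vj where t: "ti = (xi, gi, vi)" "tj = (xj, gj, vj)" by (cases ti, cases tj) auto
  define M where "M = L - \<mu>"
  define u where "u = xi - xj"
  have M: "M > 0" and L: "L = M + \<mu>" using assms by (simp_all add: M_def)
  have "shifted_grad \<mu> (xi, gi, vi) - shifted_grad \<mu> (xj, gj, vj) = (gi - gj) - \<mu> *\<^sub>R u"
    unfolding shifted_grad_def u_def by (simp add: algebra_simps)
  then have n1: "(norm (shifted_grad \<mu> (xi, gi, vi) - shifted_grad \<mu> (xj, gj, vj)))\<^sup>2
      = (norm (gi - gj))\<^sup>2 - 2 * \<mu> * (inner gi u - inner gj u) + \<mu>\<^sup>2 * (norm u)\<^sup>2"
    by (simp add: norm_diff_square inner_diff_left power_mult_distrib)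
  have n2: "\<mu> / 2 * (norm xi)\<^sup>2 = \<mu> / 2 * (norm xj)\<^sup>2 + \<mu> * inner xj u + \<mu> / 2 * (norm u)\<^sup>2"
    unfolding u_def by (rule half_norm_square_expand)
  have i2: "inner (shifted_grad \<mu> (xj, gj, vj)) u = inner gj u - \<mu> * inner xj u"
    unfolding shifted_grad_def by (simp add: inner_diff_left)
  have "coefL \<mu> (ereal L) * inner gj u + coef1 \<mu> (ereal L) / 2 * (norm (gi - gj))\<^sup>2
      + coefmu \<mu> (ereal L) * (- inner gi u) + coefLmu \<mu> (ereal L) / 2 * (norm u)\<^sup>2
      = inner gj u + \<mu> / 2 * (norm u)\<^sup>2
        + 1 / (2 * M) * ((norm (gi - gj))\<^sup>2 - 2 * \<mu> * (inner gi u - inner gj u) + \<mu>\<^sup>2 * (norm u)\<^sup>2)"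
    unfolding coefL_def coef1_def coefmu_def coefLmu_def M_def[symmetric]
    using M by (simp add: L field_simps power2_eq_square)
  moreover have gi: "inner gi (xj - xi) = - inner gi u" by (simp add: u_def inner_diff_right)
  ultimately show ?thesis
    unfolding interp_cond_def shifted_val_def M_def[symmetric] t prod.case n1 gi fst_conv snd_conv u_def[symmetric]
    using n2 i2 by linarith
qed

section \<open>Necessity of the interpolation conditions\<close>

locale FmuL_function =
  fixes f :: "'a::euclidean_space \<Rightarrow> ereal" and \<mu> L :: real
  assumes in_FmuL: "f \<in> FmuL \<mu> (ereal L)" and mu_nonneg: "0 \<le> \<mu>" and mu_less_L: "\<mu> < L"
begin

lemma not_MInfty: "f x \<noteq> -\<infinity>"
  and epigraph_closed: "closed (epigraph f)"
  and epigraph_convex: "convex (epigraph f)"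
  and shifted_epigraph_convex: "convex (epigraph (\<lambda>x. f x - ereal (\<mu> / 2 * (norm x)\<^sup>2)))"
  using in_FmuL by (simp_all add: FmuL_def)

lemma L_pos: "L > 0" using mu_nonneg mu_less_L by simp

lemma subgradient_lipschitz:
  assumes "g1 \<in> subdiff f x1" "g2 \<in> subdiff f x2"
  shows "norm (g1 - g2) \<le> L * norm (x1 - x2)"
proof -
  have "inv_L (ereal L) * norm (g1 - g2) \<le> norm (x1 - x2)"
    using in_FmuL assms unfolding FmuL_def by blast
  thus ?thesis using L_pos by (simp add: inv_L_def field_simps)
qed

lemma subgradient_unique: "g1 \<in> subdiff f x \<Longrightarrow> g2 \<in> subdiff f x \<Longrightarrow> g1 = g2"
  using subgradient_lipschitz[of g1 x g2 x] by simp

lemma finite_if_subgradient: "g \<in> subdiff f x \<Longrightarrow> f x = ereal (real_of_ereal (f x))"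
  using not_MInfty[of x] unfolding subdiff_def by (cases "f x") auto

lemma closed_subdiff_domain: "closed {x. subdiff f x \<noteq> {}}"
  unfolding closed_sequential_limits
proof (intro allI impI, elim conjE)
  fix p :: "nat \<Rightarrow> 'a" and l
  assume "\<forall>n. p n \<in> {x. subdiff f x \<noteq> {}}" and pl: "p \<longlonglongrightarrow> l"
  then have "\<forall>n. \<exists>g. g \<in> subdiff f (p n)" by blast
  then obtain \<gamma> where \<gamma>: "\<And>n. \<gamma> n \<in> subdiff f (p n)" by metis
  define v where "v n = real_of_ereal (f (p n))" for n
  have v: "f (p n) = ereal (v n)" for n using finite_if_subgradient[OF \<gamma>] by (simp add: v_def)
  have "Cauchy \<gamma>"
    by (rule Cauchy_if_dist_le_mult[OF LIMSEQ_imp_Cauchy[OF pl]])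
      (use subgradient_lipschitz[OF \<gamma> \<gamma>] in \<open>simp add: dist_norm\<close>)
  then obtain \<gamma>l where \<gamma>l: "\<gamma> \<longlonglongrightarrow> \<gamma>l" using Cauchy_convergent convergent_def by blast
  then obtain B where B: "\<And>n. norm (\<gamma> n) \<le> B"
    using convergent_imp_bounded[of \<gamma>] unfolding bounded_iff convergent_def by blast
  have "Cauchy v"
    by (rule Cauchy_if_dist_le_mult[OF LIMSEQ_imp_Cauchy[OF pl]])
      (use subgradient_value_diff_le[OF \<gamma> \<gamma> v v B B] in \<open>simp add: dist_real_def\<close>)
  then obtain vl where "v \<longlonglongrightarrow> vl" using Cauchy_convergent convergent_def by blast
  with \<gamma>l have "\<gamma>l \<in> subdiff f l"
    using subgradient_of_limits[OF epigraph_closed not_MInfty \<gamma> v pl] by blast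
  then show "l \<in> {x. subdiff f x \<noteq> {}}" by auto
qed

text \<open>If y lay outside the closed domain D of the subdifferential, its prox point m for a large
  parameter c would lie in D with subgradient c (y - m), and the Lipschitz bound on subgradients
  would make norm (y - m) smaller than the distance from y to D.\<close>
lemma subdiff_nonempty_everywhere:
  assumes ga: "ga \<in> subdiff f a"
  shows "subdiff f y \<noteq> {}"
proof (rule ccontr)
  define D where "D = {x. subdiff f x \<noteq> {}}"
  define \<delta> where "\<delta> = infdist y D"
  assume "\<not> subdiff f y \<noteq> {}"
  then have \<delta>: "\<delta> > 0"
    using infdist_pos_not_in_closed[OF closed_subdiff_domain[folded D_def]] ga by (auto simp: D_def \<delta>_def)
  define c where "c = L + (norm ga + L * norm (y - a) + 1) / \<delta>"
  have c: "(c - L) * \<delta> = norm ga + L * norm (y - a) + 1" using \<delta> by (simp add: c_def)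
  have "0 < norm ga + L * norm (y - a) + 1" using L_pos by (simp add: add_nonneg_pos)
  then have cL: "c - L > 0" using \<delta> unfolding c_def by simp
  obtain va where fa: "f a = ereal va" using finite_if_subgradient[OF ga] by blast
  have "f a + ereal (inner ga (z - a)) \<le> f z" for z using ga unfolding subdiff_def by blast
  then have "ereal ((va - inner ga a) + inner ga z) \<le> f z" for z
    using fa by (simp add: inner_diff_right algebra_simps)
  then obtain m vm where fm: "f m = ereal vm" and min:
    "\<And>z. f m + ereal (c / 2 * (norm (y - m))\<^sup>2) \<le> f z + ereal (c / 2 * (norm (y - z))\<^sup>2)"
    using prox_point_exists[OF epigraph_closed fa] cL L_pos by (metis add_pos_pos diff_add_cancel)
  have gm: "c *\<^sub>R (y - m) \<in> subdiff f m" by (rule subgradient_at_prox_point[OF epigraph_convex fm min])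
  then have "m \<in> D" unfolding D_def by blast
  then have "\<delta> \<le> norm (y - m)" unfolding \<delta>_def using infdist_le[of m D y] by (simp add: dist_norm)
  then have "(c - L) * \<delta> \<le> (c - L) * norm (y - m)" using cL by simp
  also have "\<dots> \<le> norm ga + L * norm (y - a)"
  proof -
    have "c * norm (y - m) \<le> norm ga + norm (c *\<^sub>R (y - m) - ga)"
      using norm_triangle_ineq2[of "c *\<^sub>R (y - m)" ga] cL L_pos by (simp add: abs_of_pos)
    also have "\<dots> \<le> norm ga + L * norm (m - a)" using subgradient_lipschitz[OF gm ga] by simp
    also have "\<dots> \<le> norm ga + L * (norm (y - m) + norm (y - a))"
    proof -
      have "norm (m - a) \<le> norm (m - y) + norm (y - a)" using norm_triangle_ineq[of "m - y" "y - a"] by simp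
      then have "norm (m - a) \<le> norm (y - m) + norm (y - a)" by (simp only: norm_minus_commute[of m y])
      then show ?thesis using L_pos by simp
    qed
    finally show ?thesis by (simp add: algebra_simps)
  qed
  finally show False using c by simp
qed

end

locale FmuL_smooth = FmuL_function +
  fixes x0
  assumes subdiff_x0_nonempty: "subdiff f x0 \<noteq> {}"
begin

definition grad :: "'a \<Rightarrow> 'a" where "grad x = (SOME g. g \<in> subdiff f x)"
definition fval :: "'a \<Rightarrow> real" where "fval x = real_of_ereal (f x)"

lemma grad_in_subdiff: "grad x \<in> subdiff f x"
  using subdiff_nonempty_everywhere subdiff_x0_nonempty unfolding grad_def by (metis ex_in_conv someI_ex)

lemma f_eq_fval: "f x = ereal (fval x)"
  using finite_if_subgradient[OF grad_in_subdiff] unfolding fval_def .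

lemma subdiff_eq_grad: "g \<in> subdiff f x \<Longrightarrow> g = grad x"
  using subgradient_unique grad_in_subdiff by blast

lemma fval_subgradient_ineq: "fval x + inner (grad x) (y - x) \<le> fval y"
proof -
  have "f x + ereal (inner (grad x) (y - x)) \<le> f y" using grad_in_subdiff[of x] unfolding subdiff_def by blast
  thus ?thesis by (simp add: f_eq_fval)
qed

lemma fval_descent: "fval (y + d) \<le> fval y + inner (grad y) d + L / 2 * (norm d)\<^sup>2"
  by (rule descent_lemma[OF fval_subgradient_ineq subgradient_lipschitz[OF grad_in_subdiff grad_in_subdiff]])

lemma shifted_cocoercive:
  defines "t z \<equiv> (z, grad z, fval z)"
  shows "shifted_val \<mu> (t xj) + inner (shifted_grad \<mu> (t xj)) (xi - xj)
    + 1 / (2 * (L - \<mu>)) * (norm (shifted_grad \<mu> (t xi) - shifted_grad \<mu> (t xj)))\<^sup>2 \<le> shifted_val \<mu> (t xi)"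
proof (rule cocoercivity_if_descent)
  show "L - \<mu> > 0" using mu_less_L by simp
  show "shifted_val \<mu> (t w) + inner (shifted_grad \<mu> (t w)) (z - w) \<le> shifted_val \<mu> (t z)" for w z
    using strongly_convex_subgradient_ineq[OF shifted_epigraph_convex f_eq_fval f_eq_fval grad_in_subdiff, where x=z and y=w]
      half_norm_square_expand[where c=\<mu> and x=w and y=z]
    unfolding t_def shifted_val_def shifted_grad_def prod.sel inner_diff_left inner_scaleR_left by linarith
  show "shifted_val \<mu> (t (w + d)) \<le> shifted_val \<mu> (t w) + inner (shifted_grad \<mu> (t w)) d + (L - \<mu>) / 2 * (norm d)\<^sup>2"
    for w d
    using fval_descent[of w d] half_norm_square_expand[where c=\<mu> and x=w and y="w + d"]
    unfolding t_def shifted_val_def shifted_grad_def prod.sel inner_diff_left inner_scaleR_left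
      add_diff_cancel_left' diff_divide_distrib left_diff_distrib
    by linarith
qed

lemma interp_cond_if_subgradients:
  assumes "gi \<in> subdiff f xi" "gj \<in> subdiff f xj" "f xi = ereal vi" "f xj = ereal vj"
  shows "interp_cond \<mu> (ereal L) (xi, gi, vi) (xj, gj, vj)"
proof -
  have "gi = grad xi" "gj = grad xj" "vi = fval xi" "vj = fval xj"
    using assms subdiff_eq_grad f_eq_fval by auto
  then show ?thesis unfolding interp_cond_ereal_iff[OF mu_less_L] fst_conv
    using shifted_cocoercive[of xj xi] by simp
qed

end

theorem interp_cond_if_FmuL:
  fixes f :: "'a::euclidean_space \<Rightarrow> ereal"
  assumes "f \<in> FmuL \<mu> L" "0 \<le> \<mu>" "ereal \<mu> < L"
    and "gi \<in> subdiff f xi" "gj \<in> subdiff f xj" "f xi = ereal vi" "f xj = ereal vj"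
  shows "interp_cond \<mu> L (xi, gi, vi) (xj, gj, vj)"
proof (cases L)
  case (real L')
  interpret FmuL_smooth f \<mu> L' xj
    by unfold_locales (use assms(1-3,5) real in auto)
  show ?thesis using interp_cond_if_subgradients[OF assms(4-7)] real by simp
next
  case PInf
  have "convex (epigraph (\<lambda>x. f x - ereal (\<mu> / 2 * (norm x)\<^sup>2)))" using assms(1) by (simp add: FmuL_def)
  from strongly_convex_subgradient_ineq[OF this assms(6,7,5)] show ?thesis
    unfolding PInf interp_cond_infinity_iff .
qed (use assms(3) in simp)

lemma interp_cond_if_interpolable:
  fixes S :: "('a::euclidean_space \<times> 'a \<times> real) set"
  assumes "interpolable \<mu> L S" "0 \<le> \<mu>" "ereal \<mu> < L" "ti \<in> S" "tj \<in> S"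
  shows "interp_cond \<mu> L ti tj"
proof -
  obtain f where f: "f \<in> FmuL \<mu> L" and on_f: "\<forall>(x, g, v)\<in>S. f x = ereal v \<and> g \<in> subdiff f x"
    using assms(1) unfolding interpolable_def by blast
  obtain xi gi vi xj gj vj where t: "ti = (xi, gi, vi)" "tj = (xj, gj, vj)" by (cases ti, cases tj) auto
  have "f xi = ereal vi" "gi \<in> subdiff f xi" "f xj = ereal vj" "gj \<in> subdiff f xj"
    using on_f assms(4,5) unfolding t by auto
  then show ?thesis unfolding t using interp_cond_if_FmuL[OF f assms(2,3)] by blast
qed

section \<open>Sufficiency of the interpolation conditions\<close>

definition shifted_piece :: "real \<Rightarrow> ('a::real_inner \<times> 'a \<times> real) \<Rightarrow> 'a \<Rightarrow> real" where
  "shifted_piece \<mu> t z = shifted_val \<mu> t + inner (shifted_grad \<mu> t) (z - fst t)"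

lemma convex_on_shifted_piece: "convex_on UNIV (shifted_piece \<mu> t)"
proof -
  have "shifted_piece \<mu> t = (\<lambda>z. (shifted_val \<mu> t - inner (shifted_grad \<mu> t) (fst t)) + inner (shifted_grad \<mu> t) z)"
    by (auto simp: shifted_piece_def inner_diff_right)
  then show ?thesis using convex_on_affine by metis
qed

lemma continuous_on_shifted_piece: "continuous_on UNIV (shifted_piece \<mu> t)"
  unfolding shifted_piece_def by (intro continuous_intros)

lemma shifted_piece_add_half_norm_square:
  "shifted_piece \<mu> (x, g, v) z + \<mu> / 2 * (norm z)\<^sup>2 = v + inner g (z - x) + \<mu> / 2 * (norm (z - x))\<^sup>2"
  using half_norm_square_expand[where c=\<mu> and x=x and y=z]
  unfolding shifted_piece_def shifted_val_def shifted_grad_def prod.sel inner_diff_left inner_scaleR_left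
  by linarith

lemma shifted_piece_le_at_data:
  assumes "interp_cond \<mu> \<infinity> (x, g, v) s"
  shows "shifted_piece \<mu> s x \<le> shifted_piece \<mu> (x, g, v) x"
proof -
  obtain xj gj vj where s: "s = (xj, gj, vj)" by (cases s) auto
  have "vj + inner gj (x - xj) + \<mu> / 2 * (norm (x - xj))\<^sup>2 \<le> v"
    using assms by (simp add: s interp_cond_infinity_iff)
  then show ?thesis
    using shifted_piece_add_half_norm_square[of \<mu> xj gj vj x] shifted_piece_add_half_norm_square[of \<mu> x g v x]
    by (simp add: s)
qed

theorem interpolable_infinity:
  fixes S :: "('a::euclidean_space \<times> 'a \<times> real) set"
  assumes fin: "finite S" "S \<noteq> {}" and mu: "0 \<le> \<mu>"
    and cond: "\<And>ti tj. ti \<in> S \<Longrightarrow> tj \<in> S \<Longrightarrow> interp_cond \<mu> \<infinity> ti tj"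
  shows "interpolable \<mu> \<infinity> S"
proof -
  define \<Phi> where "\<Phi> z = Max ((\<lambda>s. shifted_piece \<mu> s z) ` S)" for z
  define f where "f z = ereal (\<Phi> z + \<mu> / 2 * (norm z)\<^sup>2)" for z
  have fin_img: "finite ((\<lambda>s. shifted_piece \<mu> s z) ` S)" "(\<lambda>s. shifted_piece \<mu> s z) ` S \<noteq> {}" for z
    using fin by auto
  have \<Phi>_convex: "convex_on UNIV \<Phi>"
    unfolding \<Phi>_def by (rule convex_on_Max_image[OF fin convex_on_shifted_piece])
  have "f \<in> FmuL \<mu> \<infinity>"
  proof -
    have "(\<lambda>x. f x - ereal (\<mu> / 2 * (norm x)\<^sup>2)) = (\<lambda>x. ereal (\<Phi> x))" by (simp add: f_def)
    moreover have "convex_on UNIV (\<lambda>z. \<Phi> z + \<mu> / 2 * (norm z)\<^sup>2)"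
      using \<Phi>_convex convex_on_scaled_norm_square[OF mu] by (rule convex_on_add)
    moreover have "continuous_on UNIV (\<lambda>z. \<Phi> z + \<mu> / 2 * (norm z)\<^sup>2)"
      unfolding \<Phi>_def by (intro continuous_intros continuous_on_Max_image[OF fin continuous_on_shifted_piece])
    ultimately show ?thesis
      using \<Phi>_convex unfolding FmuL_def f_def
      by (simp add: convex_epigraph_ereal_iff closed_epigraph_ereal inv_L_def)
  qed
  moreover have "f x = ereal v \<and> g \<in> subdiff f x" if t: "(x, g, v) \<in> S" for x g v
  proof -
    have "shifted_piece \<mu> s x \<le> shifted_piece \<mu> (x, g, v) x" if "s \<in> S" for s
      using cond[OF t that] by (rule shifted_piece_le_at_data)
    then have "\<Phi> x = shifted_piece \<mu> (x, g, v) x"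
      unfolding \<Phi>_def using fin_img t by (intro antisym Max.boundedI Max_ge) auto
    then have fx: "f x = ereal v"
      using shifted_piece_add_half_norm_square[of \<mu> x g v x] by (simp add: f_def)
    have "f x + ereal (inner g (y - x)) \<le> f y" for y
    proof -
      have "shifted_piece \<mu> (x, g, v) y \<le> \<Phi> y" unfolding \<Phi>_def using fin_img t by (intro Max_ge) auto
      moreover have "0 \<le> \<mu> / 2 * (norm (y - x))\<^sup>2" using mu by simp
      ultimately show ?thesis
        using shifted_piece_add_half_norm_square[of \<mu> x g v y] fx by (simp add: f_def)
    qed
    then show ?thesis using fx unfolding subdiff_def by simp
  qed
  ultimately show ?thesis unfolding interpolable_def by blast
qed

text \<open>The shifted data (x, g - \<mu> x, v - \<mu>/2 |x|^2) are interpolated by the Moreau envelope, with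
  parameter 1/(L - \<mu>), of the maximum phi of affine pieces, one per data point; the piece of a data
  point is maximal at its anchor x - (g - \<mu> x)/(L - \<mu>).\<close>
locale interp_data =
  fixes S :: "('a::euclidean_space \<times> 'a \<times> real) set" and \<mu> L :: real
  assumes finite_S: "finite S" and S_nonempty: "S \<noteq> {}"
    and mu_nonneg: "0 \<le> \<mu>" and mu_less_L: "\<mu> < L"
    and cond: "\<And>ti tj. ti \<in> S \<Longrightarrow> tj \<in> S \<Longrightarrow> interp_cond \<mu> (ereal L) ti tj"
begin

definition M :: real where "M = L - \<mu>"
definition anchor :: "'a \<times> 'a \<times> real \<Rightarrow> 'a" where
  "anchor t = fst t - (1 / M) *\<^sub>R shifted_grad \<mu> t"
definition piece :: "'a \<times> 'a \<times> real \<Rightarrow> 'a \<Rightarrow> real" where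
  "piece t z = shifted_piece \<mu> t z + (norm (shifted_grad \<mu> t))\<^sup>2 / (2 * M)"
definition phi :: "'a \<Rightarrow> real" where "phi z = Max ((\<lambda>t. piece t z) ` S)"
definition moreau_obj :: "'a \<Rightarrow> 'a \<Rightarrow> real" where "moreau_obj x z = phi z + M / 2 * (norm (x - z))\<^sup>2"
definition prox :: "'a \<Rightarrow> 'a" where "prox x = (SOME p. \<forall>z. moreau_obj x p \<le> moreau_obj x z)"
definition env :: "'a \<Rightarrow> real" where "env x = moreau_obj x (prox x)"
definition env_grad :: "'a \<Rightarrow> 'a" where "env_grad x = M *\<^sub>R (x - prox x)"

lemma M_pos: "M > 0" using mu_less_L unfolding M_def by simp

lemma piece_eq_affine: "piece t z = piece t 0 + inner (shifted_grad \<mu> t) z"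
  unfolding piece_def shifted_piece_def by (simp add: inner_diff_right)

lemma piece_at_own_anchor: "piece t (anchor t) = shifted_val \<mu> t - (norm (shifted_grad \<mu> t))\<^sup>2 / (2 * M)"
proof -
  define a where "a = shifted_grad \<mu> t"
  have "inner a (anchor t - fst t) = - (norm a)\<^sup>2 / M"
    unfolding anchor_def a_def[symmetric] by (simp add: power2_norm_eq_inner)
  moreover have "- (norm a)\<^sup>2 / M + (norm a)\<^sup>2 / (2 * M) = - (norm a)\<^sup>2 / (2 * M)"
    using M_pos by (simp add: field_simps)
  ultimately show ?thesis unfolding piece_def shifted_piece_def a_def[symmetric] by simp
qed

lemma piece_at_anchor:
  assumes "ti \<in> S" "tj \<in> S"
  shows "piece tj (anchor ti) \<le> piece ti (anchor ti)"
proof -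
  define ai aj d where "ai = shifted_grad \<mu> ti" and "aj = shifted_grad \<mu> tj" and "d = fst ti - fst tj"
  have "shifted_val \<mu> tj + inner aj d + 1 / (2 * M) * (norm (ai - aj))\<^sup>2 \<le> shifted_val \<mu> ti"
    using cond[OF assms] unfolding interp_cond_ereal_iff[OF mu_less_L] ai_def aj_def d_def M_def .
  moreover have "1 / (2 * M) * (norm (ai - aj))\<^sup>2 = (norm ai)\<^sup>2 / (2 * M) - inner ai aj / M + (norm aj)\<^sup>2 / (2 * M)"
    unfolding norm_diff_square using M_pos by (simp add: field_simps)
  moreover have "piece tj (anchor ti) = shifted_val \<mu> tj + inner aj d - inner ai aj / M + (norm aj)\<^sup>2 / (2 * M)"
  proof -
    have "anchor ti - fst tj = d - (1 / M) *\<^sub>R ai" unfolding anchor_def ai_def d_def by simp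
    then have "inner aj (anchor ti - fst tj) = inner aj d - inner ai aj / M"
      by (simp add: inner_diff_right inner_commute[of aj ai])
    then show ?thesis unfolding piece_def shifted_piece_def aj_def[symmetric] by simp
  qed
  ultimately show ?thesis unfolding piece_at_own_anchor ai_def[symmetric] by linarith
qed

lemma piece_le_phi: "t \<in> S \<Longrightarrow> piece t z \<le> phi z"
  unfolding phi_def using finite_S by (intro Max_ge) auto

lemma phi_at_anchor:
  assumes t: "t \<in> S"
  shows "phi (anchor t) = piece t (anchor t)"
proof (rule antisym)
  have "\<forall>t'\<in>S. piece t' (anchor t) \<le> piece t (anchor t)" using piece_at_anchor[OF t] by blast
  then show "phi (anchor t) \<le> piece t (anchor t)"
    unfolding phi_def using finite_S S_nonempty by (simp add: Max_le_iff)
qed (rule piece_le_phi[OF t])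

lemma convex_on_phi: "convex_on UNIV phi"
proof -
  have "(\<lambda>z. piece t 0 + inner (shifted_grad \<mu> t) z) = piece t" for t
    by (rule ext) (rule piece_eq_affine[symmetric])
  then have "convex_on UNIV (piece t)" for t using convex_on_affine by metis
  then show ?thesis unfolding phi_def by (rule convex_on_Max_image[OF finite_S S_nonempty])
qed

lemma continuous_on_phi: "continuous_on UNIV phi"
  unfolding phi_def piece_def
  by (intro continuous_on_Max_image[OF finite_S S_nonempty] continuous_intros continuous_on_shifted_piece)

lemma prox_exists: "\<exists>p. \<forall>z. moreau_obj x p \<le> moreau_obj x z"
proof -
  obtain t where t: "t \<in> S" using S_nonempty by auto
  have "ereal (piece t 0 + inner (shifted_grad \<mu> t) z) \<le> ereal (phi z)" for z
    using piece_le_phi[OF t, of z] unfolding piece_eq_affine[of t z] by simp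
  from prox_point_exists[OF closed_epigraph_ereal[OF continuous_on_phi] refl this M_pos, of x]
  show ?thesis unfolding moreau_obj_def by auto
qed

lemma prox_min: "moreau_obj x (prox x) \<le> moreau_obj x z"
  using someI_ex[OF prox_exists] unfolding prox_def by blast

lemma env_grad_subgradient: "phi (prox x) + inner (env_grad x) (z - prox x) \<le> phi z"
proof -
  have "convex (epigraph (\<lambda>z. ereal (phi z)))" using convex_on_phi by (simp add: convex_epigraph_ereal_iff)
  from subgradient_at_prox_point[OF this refl, where c=M and y=x] prox_min
  have "env_grad x \<in> subdiff (\<lambda>z. ereal (phi z)) (prox x)" by (simp add: moreau_obj_def env_grad_def)
  then show ?thesis unfolding subdiff_def by simp
qed

lemma moreau_obj_ge_env: "env x + M / 2 * (norm (z - prox x))\<^sup>2 \<le> moreau_obj x z"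
proof -
  define p where "p = prox x"
  have "(norm (x - z))\<^sup>2 = (norm (x - p))\<^sup>2 - 2 * inner (x - p) (z - p) + (norm (z - p))\<^sup>2"
    using norm_diff_square[of "x - p" "z - p"] by simp
  then have "M / 2 * (norm (x - z))\<^sup>2 = M / 2 * (norm (x - p))\<^sup>2 - M * inner (x - p) (z - p) + M / 2 * (norm (z - p))\<^sup>2"
    by (simp only:) (simp add: algebra_simps)
  moreover have "phi p + M * inner (x - p) (z - p) \<le> phi z"
    using env_grad_subgradient[of x z] unfolding p_def env_grad_def by simp
  ultimately show ?thesis unfolding env_def moreau_obj_def p_def[symmetric] by linarith
qed

lemma env_le_quadratic: "env y \<le> env x + inner (env_grad x) (y - x) + M / 2 * (norm (y - x))\<^sup>2"
proof -
  define p where "p = prox x"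
  have "env y \<le> moreau_obj y p" unfolding env_def by (rule prox_min)
  moreover have "M / 2 * (norm (y - p))\<^sup>2 = M / 2 * (norm (x - p))\<^sup>2 + M * inner (x - p) (y - x) + M / 2 * (norm (y - x))\<^sup>2"
    using half_norm_square_expand[where c=M and x="x - p" and y="y - p"] by simp
  ultimately show ?thesis
    unfolding env_def moreau_obj_def env_grad_def p_def[symmetric] inner_scaleR_left by linarith
qed

lemma env_cocoercive:
  "env x + inner (env_grad x) (y - x) + 1 / (2 * M) * (norm (env_grad y - env_grad x))\<^sup>2 \<le> env y"
proof -
  define P Q where "P = prox x" and "Q = prox y"
  define a b c where "a = y - x" and "b = x - Q" and "c = Q - P"
  have grad_diff: "env_grad y - env_grad x = M *\<^sub>R (a - c)"
    and grad_x: "inner (env_grad x) (y - x) = M * inner b a + M * inner c a"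
    unfolding env_grad_def a_def b_def c_def P_def[symmetric] Q_def[symmetric]
    by (simp_all add: algebra_simps inner_add_left)
  have "1 / (2 * M) * (norm (M *\<^sub>R (a - c)))\<^sup>2 = M / 2 * (norm (a - c))\<^sup>2"
  proof -
    have "norm (M *\<^sub>R (a - c)) = M * norm (a - c)" using M_pos by (simp only: norm_scaleR abs_of_pos)
    then show ?thesis using M_pos by (simp add: power_mult_distrib power2_eq_square field_simps)
  qed
  then have "env x + inner (env_grad x) (y - x) + 1 / (2 * M) * (norm (env_grad y - env_grad x))\<^sup>2
      = env x + M / 2 * ((norm c)\<^sup>2 + (norm (a + b))\<^sup>2 - (norm b)\<^sup>2)"
    unfolding grad_diff grad_x norm_add_square norm_diff_square by (simp add: inner_commute algebra_simps)
  also have "\<dots> \<le> env y"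
  proof -
    have "env x + M / 2 * (norm c)\<^sup>2 \<le> phi Q + M / 2 * (norm b)\<^sup>2"
      using moreau_obj_ge_env[of x Q] unfolding moreau_obj_def P_def b_def c_def .
    moreover have "env y = phi Q + M / 2 * (norm (a + b))\<^sup>2"
      unfolding env_def moreau_obj_def Q_def a_def b_def by simp
    ultimately show ?thesis by (simp add: algebra_simps)
  qed
  finally show ?thesis .
qed

lemma env_subgradient_ineq: "env x + inner (env_grad x) (y - x) \<le> env y"
proof -
  have "0 \<le> 1 / (2 * M) * (norm (env_grad y - env_grad x))\<^sup>2" using M_pos by simp
  with env_cocoercive[of x y] show ?thesis by linarith
qed

lemma continuous_on_env: "continuous_on UNIV env"
proof -
  have "(env \<longlongrightarrow> env x) (at x)" for x
  proof (rule tendsto_sandwich)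
    show "\<forall>\<^sub>F y in at x. env x + inner (env_grad x) (y - x) \<le> env y"
      by (rule always_eventually) (intro allI env_subgradient_ineq)
    show "\<forall>\<^sub>F y in at x. env y \<le> env x + inner (env_grad x) (y - x) + M / 2 * (norm (y - x))\<^sup>2"
      by (rule always_eventually) (intro allI env_le_quadratic)
  qed (auto intro!: tendsto_eq_intros)
  then show ?thesis by (simp add: continuous_on_eq_continuous_at isCont_def)
qed

lemma env_at_data:
  assumes t: "t \<in> S"
  shows "env (fst t) = shifted_val \<mu> t" and "env_grad (fst t) = shifted_grad \<mu> t"
proof -
  define x a where "x = fst t" and "a = shifted_grad \<mu> t"
  have anchor: "anchor t = x - (1 / M) *\<^sub>R a" unfolding anchor_def x_def a_def ..
  have lower: "shifted_val \<mu> t + M / 2 * (norm (z - anchor t))\<^sup>2 \<le> moreau_obj x z" for z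
  proof -
    have "M / 2 * (norm (z - anchor t))\<^sup>2 = M / 2 * (norm (x - z))\<^sup>2 + inner a (z - x) + (norm a)\<^sup>2 / (2 * M)"
      unfolding anchor using M_pos half_norm_square_expand[where c=M and x="z - x" and y="z - x + (1 / M) *\<^sub>R a"]
      by (simp add: norm_minus_commute power_mult_distrib power2_eq_square field_simps inner_commute)
    then show ?thesis
      using piece_le_phi[OF t, of z] unfolding moreau_obj_def piece_def shifted_piece_def x_def a_def by linarith
  qed
  have "M / 2 * (norm (x - anchor t))\<^sup>2 = (norm a)\<^sup>2 / (2 * M)"
    unfolding anchor using M_pos by (simp add: power_mult_distrib power2_eq_square)
  then have "moreau_obj x (anchor t) = shifted_val \<mu> t"
    unfolding moreau_obj_def phi_at_anchor[OF t] piece_at_own_anchor a_def by simp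
  then have upper: "env x \<le> shifted_val \<mu> t" unfolding env_def using prox_min[of x "anchor t"] by simp
  moreover have "0 \<le> M / 2 * (norm (prox x - anchor t))\<^sup>2" using M_pos by simp
  ultimately have env: "env x = shifted_val \<mu> t" and "M / 2 * (norm (prox x - anchor t))\<^sup>2 \<le> 0"
    using lower[of "prox x"] unfolding env_def by linarith+
  then have "prox x = anchor t" using M_pos by (simp add: mult_le_0_iff)
  then show "env (fst t) = shifted_val \<mu> t" "env_grad (fst t) = shifted_grad \<mu> t"
    using env M_pos unfolding env_grad_def anchor x_def[symmetric] a_def[symmetric] by simp_all
qed

definition interpolant :: "'a \<Rightarrow> real" where "interpolant z = env z + \<mu> / 2 * (norm z)\<^sup>2"
definition interpolant_grad :: "'a \<Rightarrow> 'a" where "interpolant_grad z = env_grad z + \<mu> *\<^sub>R z"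

lemma interpolant_subgradient_ineq: "interpolant x + inner (interpolant_grad x) (y - x) \<le> interpolant y"
proof -
  have "0 \<le> \<mu> / 2 * (norm (y - x))\<^sup>2" using mu_nonneg by simp
  then show ?thesis
    using env_subgradient_ineq[of x y] half_norm_square_expand[where c=\<mu> and x=x and y=y]
    unfolding interpolant_def interpolant_grad_def inner_add_left inner_scaleR_left by linarith
qed

lemma interpolant_le_quadratic:
  "interpolant y \<le> interpolant x + inner (interpolant_grad x) (y - x) + L / 2 * (norm (y - x))\<^sup>2"
proof -
  have "L / 2 * (norm (y - x))\<^sup>2 = M / 2 * (norm (y - x))\<^sup>2 + \<mu> / 2 * (norm (y - x))\<^sup>2"
    unfolding M_def by (simp add: field_simps)
  then show ?thesis
    using env_le_quadratic[of y x] half_norm_square_expand[where c=\<mu> and x=x and y=y]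
    unfolding interpolant_def interpolant_grad_def inner_add_left inner_scaleR_left by linarith
qed

lemma subdiff_interpolant: "subdiff (\<lambda>z. ereal (interpolant z)) x = {interpolant_grad x}"
proof -
  have "g = interpolant_grad x" if "\<And>y. interpolant x + inner g (y - x) \<le> interpolant y" for g
    using mu_nonneg mu_less_L
    by (intro subgradient_eq_if_quadratic_upper[OF _ interpolant_le_quadratic that]) simp
  then show ?thesis using interpolant_subgradient_ineq unfolding subdiff_def by auto
qed

lemma interpolant_grad_lipschitz: "norm (interpolant_grad x - interpolant_grad y) \<le> L * norm (x - y)"
proof -
  have "1 / M * (norm (env_grad x - env_grad y))\<^sup>2 \<le> inner (env_grad x - env_grad y) (x - y)"
    using env_cocoercive[of x y] env_cocoercive[of y x] M_pos
    by (simp add: norm_minus_commute inner_diff_left inner_diff_right inner_commute)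
  then have "(norm (env_grad x - env_grad y))\<^sup>2 \<le> M * inner (env_grad x - env_grad y) (x - y)"
    using M_pos by (simp add: field_simps)
  from norm_add_scaleR_le_if_cocoercive[OF M_pos mu_nonneg this]
  show ?thesis unfolding interpolant_grad_def M_def by (simp add: algebra_simps)
qed

lemma interpolant_at_data:
  assumes "(x, g, v) \<in> S"
  shows "interpolant x = v" and "interpolant_grad x = g"
  using env_at_data[OF assms]
  by (simp_all add: interpolant_def interpolant_grad_def shifted_val_def shifted_grad_def)

theorem interpolable_finite: "interpolable \<mu> (ereal L) S"
proof -
  define f where "f = (\<lambda>z. ereal (interpolant z))"
  have "continuous_on UNIV interpolant"
    unfolding interpolant_def by (intro continuous_intros continuous_on_env)
  moreover have "convex_on UNIV interpolant" "convex_on UNIV env"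
    using convex_on_if_subgradients[OF interpolant_subgradient_ineq]
      convex_on_if_subgradients[OF env_subgradient_ineq] .
  moreover have "inv_L (ereal L) * norm (g1 - g2) \<le> norm (x1 - x2)"
    if "g1 \<in> subdiff f x1" "g2 \<in> subdiff f x2" for x1 x2 g1 g2
    using that interpolant_grad_lipschitz[of x1 x2] mu_nonneg mu_less_L
    by (simp add: f_def subdiff_interpolant inv_L_def field_simps)
  moreover have "(\<lambda>x. f x - ereal (\<mu> / 2 * (norm x)\<^sup>2)) = (\<lambda>x. ereal (env x))"
    by (simp add: f_def interpolant_def)
  ultimately have "f \<in> FmuL \<mu> (ereal L)"
    unfolding FmuL_def by (simp add: f_def convex_epigraph_ereal_iff closed_epigraph_ereal)
  moreover have "f x = ereal v \<and> g \<in> subdiff f x" if "(x, g, v) \<in> S" for x g v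
    using interpolant_at_data[OF that] by (simp add: f_def subdiff_interpolant)
  ultimately show ?thesis unfolding interpolable_def by blast
qed

end

theorem interpolable_if_interp_cond:
  fixes S :: "('a::euclidean_space \<times> 'a \<times> real) set"
  assumes "finite S" "S \<noteq> {}" "0 \<le> \<mu>" "ereal \<mu> < L"
    and "\<And>ti tj. ti \<in> S \<Longrightarrow> tj \<in> S \<Longrightarrow> interp_cond \<mu> L ti tj"
  shows "interpolable \<mu> L S"
proof (cases L)
  case (real L')
  interpret interp_data S \<mu> L' by unfold_locales (use assms real in auto)
  show ?thesis using interpolable_finite real by simp
next
  case PInf
  then show ?thesis using interpolable_infinity[OF assms(1-3)] assms(5) by simp
qed (use assms(4) in simp)

section \<open>Gram factorization of positive semidefinite matrices\<close>

definition quad_form :: "nat \<Rightarrow> (nat \<Rightarrow> nat \<Rightarrow> real) \<Rightarrow> (nat \<Rightarrow> real) \<Rightarrow> real" where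
  "quad_form n G v = (\<Sum>p<n. \<Sum>q<n. v p * G p q * v q)"

definition psd_upto :: "nat \<Rightarrow> (nat \<Rightarrow> nat \<Rightarrow> real) \<Rightarrow> bool" where
  "psd_upto n G \<longleftrightarrow> (\<forall>p<n. \<forall>q<n. G p q = G q p) \<and> (\<forall>v. 0 \<le> quad_form n G v)"

lemma sum_mult_delta:
  fixes f :: "nat \<Rightarrow> real"
  assumes "k < n"
  shows "(\<Sum>q<n. f q * (if q = k then c else 0)) = f k * c"
  using assms by (simp add: if_distrib[of "\<lambda>x. f _ * x"] sum.delta' cong: if_cong)

lemma sum_delta_mult:
  fixes f :: "nat \<Rightarrow> real"
  assumes "k < n"
  shows "(\<Sum>q<n. (if q = k then c else 0) * f q) = c * f k"
  using sum_mult_delta[OF assms, of f c] by (simp add: mult.commute)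

lemma quad_form_scale: "quad_form n G (\<lambda>k. t * v k) = t\<^sup>2 * quad_form n G v"
  by (simp add: quad_form_def sum_distrib_left power2_eq_square mult_ac)

lemma quad_form_delta: "k < n \<Longrightarrow> quad_form n G (\<lambda>i. if i = k then 1 else 0) = G k k"
  unfolding quad_form_def by (simp add: sum_mult_delta sum_delta_mult)

lemma quad_form_Suc:
  assumes "psd_upto (Suc n) G"
  shows "quad_form (Suc n) G w = quad_form n G w + 2 * w n * (\<Sum>p<n. w p * G p n) + w n * G n n * w n"
proof -
  have "(\<Sum>q<n. w n * G n q * w q) = w n * (\<Sum>p<n. w p * G p n)"
    unfolding sum_distrib_left by (rule sum.cong) (use assms in \<open>auto simp: psd_upto_def\<close>)
  moreover have "(\<Sum>p<n. w p * G p n * w n) = w n * (\<Sum>p<n. w p * G p n)"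
    by (simp add: sum_distrib_left algebra_simps)
  ultimately show ?thesis by (simp add: quad_form_def sum.distrib)
qed

lemma psd_upto_diag_nonneg: "psd_upto n G \<Longrightarrow> p < n \<Longrightarrow> 0 \<le> G p p"
  using quad_form_delta[of p n G] unfolding psd_upto_def by metis

lemma linear_coeff_zero_if_quadratic_nonneg:
  fixes b c :: real
  assumes "\<And>t. 0 \<le> c * t\<^sup>2 + 2 * b * t"
  shows "b = 0"
proof (rule ccontr)
  assume "b \<noteq> 0"
  define e where "e = 1 / (\<bar>c\<bar> + 1)"
  have e: "e > 0" "e * c < 1" unfolding e_def by (auto simp: field_simps)
  have "c * (- e * b)\<^sup>2 + 2 * b * (- e * b) = e * b\<^sup>2 * (e * c - 2)"
    by (simp add: power2_eq_square algebra_simps)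
  also have "\<dots> < 0" using e \<open>b \<noteq> 0\<close> by (intro mult_pos_neg) auto
  finally show False using assms[of "- e * b"] by simp
qed

lemma psd_upto_zero_diag_imp_zero_col:
  assumes psd: "psd_upto (Suc n) G" and zero: "G n n = 0" and p: "p < n"
  shows "G p n = 0"
proof (rule linear_coeff_zero_if_quadratic_nonneg)
  fix t :: real
  define w where "w k = (if k = p then t else if k = n then 1 else 0)" for k
  have "quad_form n G w = quad_form n G (\<lambda>k. t * (if k = p then 1 else 0))"
    unfolding quad_form_def w_def by (intro sum.cong refl) auto
  then have "quad_form n G w = G p p * t\<^sup>2" using quad_form_delta[OF p] by (simp add: quad_form_scale)
  moreover have "(\<Sum>q<n. w q * G q n) = (\<Sum>q<n. (if q = p then t else 0) * G q n)"
    unfolding w_def by (intro sum.cong refl) auto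
  then have "(\<Sum>q<n. w q * G q n) = t * G p n" by (simp only: sum_delta_mult[OF p])
  moreover have "w n = 1" using p by (simp add: w_def)
  ultimately have "quad_form (Suc n) G w = G p p * t\<^sup>2 + 2 * G p n * t"
    using quad_form_Suc[OF psd, of w] zero by simp
  then show "0 \<le> G p p * t\<^sup>2 + 2 * G p n * t" using psd unfolding psd_upto_def by metis
qed

lemma quad_form_upd_ignored: "quad_form n G (v(n := c)) = quad_form n G v"
  unfolding quad_form_def by (intro sum.cong refl) auto

text \<open>No case split on G n n is needed: if it vanishes, so does the last column
  (psd_upto_zero_diag_imp_zero_col), and the division by zero yields 0.\<close>
lemma schur_complement_psd:
  assumes psd: "psd_upto (Suc n) G"
  shows "psd_upto n (\<lambda>p q. G p q - G p n * G q n / G n n)"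
proof -
  define a where "a = G n n"
  have "0 \<le> quad_form n (\<lambda>p q. G p q - G p n * G q n / a) v" for v
  proof -
    define s where "s = (\<Sum>p<n. v p * G p n)"
    have "quad_form n (\<lambda>p q. G p q - G p n * G q n / a) v
        = (\<Sum>p<n. \<Sum>q<n. v p * G p q * v q - (v p * G p n) * (v q * G q n) / a)"
      unfolding quad_form_def by (intro sum.cong refl) (simp add: field_simps)
    also have "\<dots> = quad_form n G v - (\<Sum>p<n. \<Sum>q<n. (v p * G p n) * (v q * G q n)) / a"
      by (simp add: quad_form_def sum_subtractf sum_divide_distrib)
    also have "(\<Sum>p<n. \<Sum>q<n. (v p * G p n) * (v q * G q n)) = s * s"
      unfolding s_def sum_product ..
    moreover have "quad_form (Suc n) G (v(n := - s / a)) = quad_form n G v - s * s / a"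
    proof (cases "a = 0")
      case True
      then have "s = 0" unfolding s_def a_def using psd_upto_zero_diag_imp_zero_col[OF psd] by simp
      then show ?thesis using quad_form_Suc[OF psd] True by (simp add: quad_form_upd_ignored a_def)
    next
      case False
      have "(\<Sum>p<n. (v(n := - s / a)) p * G p n) = s" unfolding s_def by (intro sum.cong refl) auto
      then show ?thesis using quad_form_Suc[OF psd] False
        by (simp add: quad_form_upd_ignored a_def[symmetric] field_simps power2_eq_square)
    qed
    moreover have "0 \<le> quad_form (Suc n) G (v(n := - s / a))" using psd unfolding psd_upto_def by blast
    ultimately show ?thesis by simp
  qed
  moreover have "\<forall>p<n. \<forall>q<n. G p q - G p n * G q n / a = G q p - G q n * G p n / a"
    using psd unfolding psd_upto_def by (simp add: mult.commute)
  ultimately show ?thesis unfolding psd_upto_def a_def by blast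
qed

lemma psd_upto_last_entry:
  assumes psd: "psd_upto (Suc n) G" and pq: "p \<le> n" "q \<le> n" "p = n \<or> q = n"
  shows "G p q = G p n * G q n / G n n"
proof (cases "G n n = 0")
  case True
  then have "G k n = 0" if "k \<le> n" for k
    using psd_upto_zero_diag_imp_zero_col[OF psd True, of k] that by (cases "k = n") auto
  moreover have "G p q = G q p" using psd pq unfolding psd_upto_def by simp
  ultimately show ?thesis using pq by auto
next
  case False
  have "G n q = G q n" using psd pq unfolding psd_upto_def by simp
  then show ?thesis using pq False by auto
qed

lemma psd_upto_factorization:
  assumes "psd_upto n G"
  shows "\<exists>R. \<forall>p<n. \<forall>q<n. G p q = (\<Sum>k<n. R p k * R q k)"
  using assms
proof (induction n arbitrary: G)
  case (Suc n)
  define a where "a = G n n"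
  obtain R where R: "\<forall>p<n. \<forall>q<n. G p q - G p n * G q n / a = (\<Sum>k<n. R p k * R q k)"
    using Suc.IH[OF schur_complement_psd[OF Suc.prems]] unfolding a_def by blast
  define R' where "R' p k = (if k < n then (if p < n then R p k else 0) else G p n / sqrt a)" for p k
  have "G p q = (\<Sum>k<Suc n. R' p k * R' q k)" if "p < Suc n" "q < Suc n" for p q
  proof -
    have "sqrt a * sqrt a = a" using psd_upto_diag_nonneg[OF Suc.prems, of n] by (simp add: a_def)
    then have "R' p n * R' q n = G p n * G q n / a" by (simp add: R'_def)
    then have split: "(\<Sum>k<Suc n. R' p k * R' q k) = (\<Sum>k<n. R' p k * R' q k) + G p n * G q n / a"
      by simp
    show ?thesis
    proof (cases "p < n \<and> q < n")
      case True
      then have "(\<Sum>k<n. R' p k * R' q k) = (\<Sum>k<n. R p k * R q k)"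
        unfolding R'_def by (intro sum.cong refl) simp
      moreover have "G p q - G p n * G q n / a = (\<Sum>k<n. R p k * R q k)" using R True by blast
      ultimately show ?thesis using split by linarith
    next
      case False
      then have "R' p k * R' q k = 0" if "k < n" for k using that by (auto simp: R'_def)
      then have "(\<Sum>k<n. R' p k * R' q k) = 0" by (intro sum.neutral) simp
      moreover have "p \<le> n" "q \<le> n" "p = n \<or> q = n" using that False by auto
      then have "G p q = G p n * G q n / a" unfolding a_def by (rule psd_upto_last_entry[OF Suc.prems])
      ultimately show ?thesis using split by simp
    qed
  qed
  then show ?case by blast
qed simp

lemma exists_orthonormal_family:
  assumes "n \<le> DIM('a::euclidean_space)"
  shows "\<exists>e :: nat \<Rightarrow> 'a. \<forall>k<n. \<forall>l<n. inner (e k) (e l) = (if k = l then 1 else 0)"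
proof -
  obtain e :: "nat \<Rightarrow> 'a" where e: "e ` {..<n} \<subseteq> Basis" "inj_on e {..<n}"
    using card_le_inj[of "{..<n}" "Basis :: 'a set"] assms by auto
  have "inner (e k) (e l) = (if k = l then 1 else 0)" if "k < n" "l < n" for k l
  proof -
    have "e k \<in> Basis" "e l \<in> Basis" "e k = e l \<longleftrightarrow> k = l"
      using e that by (auto dest: inj_onD)
    then show ?thesis using inner_Basis[of "e k" "e l"] by simp
  qed
  then show ?thesis by blast
qed

definition gram :: "(nat \<Rightarrow> 'a::real_inner) \<Rightarrow> nat \<Rightarrow> nat \<Rightarrow> real" where
  "gram P p q = inner (P p) (P q)"

lemma psd_upto_gram_factorization:
  assumes "psd_upto n G" "n \<le> DIM('a::euclidean_space)"
  shows "\<exists>P :: nat \<Rightarrow> 'a. \<forall>p<n. \<forall>q<n. G p q = gram P p q"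
proof -
  obtain R where R: "\<forall>p<n. \<forall>q<n. G p q = (\<Sum>k<n. R p k * R q k)"
    using psd_upto_factorization[OF assms(1)] by blast
  obtain e :: "nat \<Rightarrow> 'a" where e: "\<forall>k<n. \<forall>l<n. inner (e k) (e l) = (if k = l then 1 else 0)"
    using exists_orthonormal_family[OF assms(2)] by blast
  define P where "P p = (\<Sum>k<n. R p k *\<^sub>R e k)" for p
  have "gram P p q = (\<Sum>k<n. R p k * inner (e k) (P q))" for p q
    unfolding gram_def P_def[of p] by (simp add: inner_sum_left)
  also have "\<dots> p q = (\<Sum>k<n. \<Sum>l<n. R p k * R q l * inner (e k) (e l))" for p q
    unfolding P_def by (simp add: inner_sum_right sum_distrib_left mult.assoc)
  also have "\<dots> p q = (\<Sum>k<n. \<Sum>l<n. (R p k * R q l) * (if l = k then 1 else 0))" for p q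
    using e by (intro sum.cong refl) (simp add: eq_commute)
  also have "\<dots> p q = (\<Sum>k<n. R p k * R q k)" for p q
    by (simp add: sum_mult_delta)
  finally show ?thesis using R by metis
qed

section \<open>The semidefinite reformulation\<close>

definition lin_comb :: "nat \<Rightarrow> (nat \<Rightarrow> 'a::real_vector) \<Rightarrow> (nat \<Rightarrow> real) \<Rightarrow> 'a" where
  "lin_comb N P c = (\<Sum>p\<le>N+1. c p *\<^sub>R P p)"

lemma lin_comb_diff: "lin_comb N P (\<lambda>p. a p - b p) = lin_comb N P a - lin_comb N P b"
  unfolding lin_comb_def by (simp only: scaleR_diff_left sum_subtractf)

lemma sum_gram_bilinear:
  fixes P :: "nat \<Rightarrow> 'a::real_inner"
  shows "(\<Sum>p\<le>N+1. \<Sum>q\<le>N+1. gram P p q * (a q * b p)) = inner (lin_comb N P b) (lin_comb N P a)"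
proof -
  have "inner (lin_comb N P b) (lin_comb N P a) = (\<Sum>p\<le>N+1. b p * inner (P p) (lin_comb N P a))"
    unfolding lin_comb_def[of N P b] by (simp only: inner_sum_left inner_scaleR_left)
  also have "\<dots> = (\<Sum>p\<le>N+1. \<Sum>q\<le>N+1. b p * (a q * inner (P p) (P q)))"
    unfolding lin_comb_def by (simp only: inner_sum_right inner_scaleR_right sum_distrib_left)
  finally show ?thesis unfolding gram_def by (simp add: mult_ac)
qed

lemma psd_mat_gram: "psd_mat N (gram P)"
proof -
  have "(\<Sum>p\<le>N+1. \<Sum>q\<le>N+1. v p * gram P p q * v q) = (norm (lin_comb N P v))\<^sup>2" for v
    using sum_gram_bilinear[where N=N and P=P and a=v and b=v] by (simp add: power2_norm_eq_inner mult_ac)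
  then show ?thesis unfolding psd_mat_def sym_mat_def gram_def by (simp add: inner_commute)
qed

lemma psd_mat_iff_psd_upto: "psd_mat N G \<longleftrightarrow> psd_upto (N + 2) G"
proof -
  have "{..<N + 2} = {..N + 1}" by auto
  then show ?thesis unfolding psd_mat_def sym_mat_def psd_upto_def quad_form_def by auto
qed

lemma trace_prod_cong:
  assumes "\<And>p q. p \<le> N + 1 \<Longrightarrow> q \<le> N + 1 \<Longrightarrow> G p q = G' p q"
    and "\<And>p q. p \<le> N + 1 \<Longrightarrow> q \<le> N + 1 \<Longrightarrow> A p q = A' p q"
  shows "trace_prod N G A = trace_prod N G' A'"
  unfolding trace_prod_def using assms by (intro sum.cong refl) auto

lemma trace_prod_AR: "trace_prod N G (AR N) = G (N+1) (N+1)"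
  unfolding trace_prod_def AR_def by (simp add: if_distrib if_distribR sum.delta' cong: if_cong)

lemma trace_prod_gram_Amat:
  fixes P :: "nat \<Rightarrow> 'a::real_inner" and h :: "nat \<Rightarrow> nat \<Rightarrow> real" and N :: nat
  defines "X k \<equiv> lin_comb N P (hvec h N k)" and "U k \<equiv> lin_comb N P (uvec k)"
  shows "trace_prod N (gram P) (Amat \<mu> L h N i j) =
    coefL \<mu> L * inner (U j) (X i - X j) + coef1 \<mu> L / 2 * (norm (U i - U j))\<^sup>2
    + coefmu \<mu> L * inner (U i) (X j - X i) + coefLmu \<mu> L / 2 * (norm (X i - X j))\<^sup>2"
proof -
  define hi hj ui uj where "hi = hvec h N i" and "hj = hvec h N j" and "ui = uvec i" and "uj = uvec j"
  define dh du where "dh p = hi p - hj p" and "du p = ui p - uj p" for p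
  define T where "T a b = (\<Sum>p\<le>N+1. \<Sum>q\<le>N+1. gram P p q * (a q * b p))" for a b
  have T: "T a b = inner (lin_comb N P b) (lin_comb N P a)" for a b
    unfolding T_def by (rule sum_gram_bilinear)
  define cL c1 cm cLm where "cL = coefL \<mu> L" and "c1 = coef1 \<mu> L" and "cm = coefmu \<mu> L"
    and "cLm = coefLmu \<mu> L"
  have "gram P p q * Amat \<mu> L h N i j q p =
      cL / 2 * (gram P p q * (uj q * dh p)) + cL / 2 * (gram P p q * (dh q * uj p))
      + c1 / 2 * (gram P p q * (du q * du p)) - cm / 2 * (gram P p q * (ui q * dh p))
      - cm / 2 * (gram P p q * (dh q * ui p)) + cLm / 2 * (gram P p q * (dh q * dh p))" for p q
    unfolding Amat_def Let_def hi_def[symmetric] hj_def[symmetric] ui_def[symmetric] uj_def[symmetric]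
      dh_def du_def cL_def[symmetric] c1_def[symmetric] cm_def[symmetric] cLm_def[symmetric]
    by (simp add: field_simps)
  then have "trace_prod N (gram P) (Amat \<mu> L h N i j) =
      cL / 2 * T uj dh + cL / 2 * T dh uj + c1 / 2 * T du du - cm / 2 * T ui dh
      - cm / 2 * T dh ui + cLm / 2 * T dh dh"
    unfolding trace_prod_def T_def by (simp only: sum.distrib sum_subtractf sum_distrib_left[symmetric])
  moreover have "lin_comb N P dh = X i - X j" "lin_comb N P du = U i - U j"
    unfolding dh_def du_def lin_comb_diff X_def U_def hi_def hj_def ui_def uj_def by simp_all
  ultimately show ?thesis
    unfolding T X_def[symmetric] U_def[symmetric] ui_def uj_def cL_def c1_def cm_def cLm_def
    by (simp add: inner_commute power2_norm_eq_inner inner_diff_right field_simps)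
qed

text \<open>The triple (x_k, g_k, f_k) = (P h_k, P u_k, f_k) read off the columns P; the index None stands
  for the minimizer *.\<close>
definition pep_point :: "(nat \<Rightarrow> nat \<Rightarrow> real) \<Rightarrow> nat \<Rightarrow> (nat \<Rightarrow> 'a::real_vector) \<Rightarrow> (nat \<Rightarrow> real)
    \<Rightarrow> nat option \<Rightarrow> 'a \<times> 'a \<times> real" where
  "pep_point h N P fv k = (lin_comb N P (hvec h N k), lin_comb N P (uvec k), fopt fv k)"

lemma interp_cond_pep_point_iff:
  fixes P :: "nat \<Rightarrow> 'a::euclidean_space"
  shows "interp_cond \<mu> L (pep_point h N P fv i) (pep_point h N P fv j) \<longleftrightarrow>
    fopt fv j - fopt fv i + trace_prod N (gram P) (Amat \<mu> L h N i j) \<le> 0"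
  unfolding interp_cond_def pep_point_def trace_prod_gram_Amat by simp

lemma lin_comb_hvec:
  assumes "i \<le> N"
  shows "lin_comb N P (hvec h N (Some i)) = P (N+1) - (\<Sum>k<i. h i k *\<^sub>R P k)"
proof -
  have "lin_comb N P (hvec h N (Some i)) = (\<Sum>p\<le>N. hvec h N (Some i) p *\<^sub>R P p) + P (N+1)"
    unfolding lin_comb_def by (simp add: hvec_def)
  also have "(\<Sum>p\<le>N. hvec h N (Some i) p *\<^sub>R P p) = (\<Sum>p\<le>N. if p < i then - (h i p *\<^sub>R P p) else 0)"
    by (intro sum.cong refl) (auto simp: hvec_def)
  also have "\<dots> = (\<Sum>p\<in>{p\<in>{..N}. p < i}. - (h i p *\<^sub>R P p))"
    by (rule sum.inter_filter[symmetric]) simp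
  also have "{p\<in>{..N}. p < i} = {..<i}" using assms by auto
  finally show ?thesis by (simp add: sum_negf)
qed

lemma lin_comb_uvec:
  assumes "i \<le> N + 1"
  shows "lin_comb N P (uvec (Some i)) = P i"
proof -
  have "lin_comb N P (uvec (Some i)) = (\<Sum>p\<le>N+1. if p = i then P p else 0)"
    unfolding lin_comb_def by (intro sum.cong refl) (simp add: uvec_def)
  then show ?thesis using assms by simp
qed

lemma lin_comb_None: "lin_comb N P (hvec h N None) = 0" "lin_comb N P (uvec None) = 0"
  unfolding lin_comb_def hvec_def uvec_def by simp_all

lemma interpolable_iff_sdp_constraints:
  fixes P :: "nat \<Rightarrow> 'a::euclidean_space"
  assumes "0 \<le> \<mu>" "ereal \<mu> < L"
  shows "interpolable \<mu> L (pep_point h N P fv ` Iset N) \<longleftrightarrow>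
    (\<forall>i\<in>Iset N. \<forall>j\<in>Iset N. fopt fv j - fopt fv i + trace_prod N (gram P) (Amat \<mu> L h N i j) \<le> 0)"
    (is "?interp \<longleftrightarrow> ?constraints")
proof
  assume ?interp
  show ?constraints
  proof (intro ballI)
    fix i j assume "i \<in> Iset N" "j \<in> Iset N"
    then have "interp_cond \<mu> L (pep_point h N P fv i) (pep_point h N P fv j)"
      by (intro interp_cond_if_interpolable[OF \<open>?interp\<close> assms]) auto
    then show "fopt fv j - fopt fv i + trace_prod N (gram P) (Amat \<mu> L h N i j) \<le> 0"
      unfolding interp_cond_pep_point_iff .
  qed
next
  assume ?constraints
  have "interp_cond \<mu> L ti tj"
    if ti: "ti \<in> pep_point h N P fv ` Iset N" and tj: "tj \<in> pep_point h N P fv ` Iset N" for ti tj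
  proof -
    obtain i j where ij: "i \<in> Iset N" "j \<in> Iset N" and "ti = pep_point h N P fv i" "tj = pep_point h N P fv j"
      using ti tj by blast
    moreover have "interp_cond \<mu> L (pep_point h N P fv i) (pep_point h N P fv j)"
      using \<open>?constraints\<close> ij unfolding interp_cond_pep_point_iff by blast
    ultimately show ?thesis by simp
  qed
  moreover have "finite (Iset N)" "Iset N \<noteq> {}" by (simp_all add: Iset_def)
  ultimately show ?interp by (intro interpolable_if_interp_cond assms) auto
qed

lemma pep_data_eq_pep_points:
  assumes iter: "\<forall>i\<in>{1..N}. x i = x 0 - (\<Sum>k<i. h i k *\<^sub>R g k)"
  shows "{(x i, g i, fv i) | i. i \<le> N} \<union> {(0, 0, 0)} = pep_point h N (Pcol N x g) fv ` Iset N"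
proof -
  have "pep_point h N (Pcol N x g) fv (Some i) = (x i, g i, fv i)" if "i \<le> N" for i
  proof -
    have "lin_comb N (Pcol N x g) (hvec h N (Some i)) = x 0 - (\<Sum>k<i. h i k *\<^sub>R g k)"
      unfolding lin_comb_hvec[OF that] using that by (auto simp: Pcol_def intro!: sum.cong)
    also have "\<dots> = x i" using iter that by (cases "i = 0") auto
    finally show ?thesis
      using lin_comb_uvec[of i N "Pcol N x g"] that by (simp add: pep_point_def Pcol_def fopt_def)
  qed
  moreover have "pep_point h N (Pcol N x g) fv None = (0, 0, 0)"
    by (simp add: pep_point_def lin_comb_None fopt_def)
  ultimately show ?thesis unfolding Iset_def by force
qed

definition pep_feasible :: "real \<Rightarrow> ereal \<Rightarrow> real \<Rightarrow> (nat \<Rightarrow> nat \<Rightarrow> real) \<Rightarrow> nat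
    \<Rightarrow> (nat \<Rightarrow> 'a::euclidean_space) \<Rightarrow> (nat \<Rightarrow> 'a) \<Rightarrow> (nat \<Rightarrow> real) \<Rightarrow> bool" where
  "pep_feasible \<mu> L R h N x g fv \<longleftrightarrow>
     interpolable \<mu> L ({(x i, g i, fv i) | i. i \<le> N} \<union> {(0, 0, 0)}) \<and>
     (\<forall>i\<in>{1..N}. x i = x 0 - (\<Sum>k<i. h i k *\<^sub>R g k)) \<and> norm (x 0 - 0) \<le> R"

definition sdp_feasible :: "real \<Rightarrow> ereal \<Rightarrow> real \<Rightarrow> (nat \<Rightarrow> nat \<Rightarrow> real) \<Rightarrow> nat
    \<Rightarrow> (nat \<Rightarrow> nat \<Rightarrow> real) \<Rightarrow> (nat \<Rightarrow> real) \<Rightarrow> bool" where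
  "sdp_feasible \<mu> L R h N G fv \<longleftrightarrow>
     (\<forall>i\<in>Iset N. \<forall>j\<in>Iset N. fopt fv j - fopt fv i + trace_prod N G (Amat \<mu> L h N i j) \<le> 0) \<and>
     trace_prod N G (AR N) \<le> R\<^sup>2 \<and> psd_mat N G"

lemma w_d_eq_Sup_pep_feasible:
  "w_d TYPE('a::euclidean_space) \<mu> L R h N b C = Sup {ereal ((\<Sum>i\<le>N. b i * fv i) + trace_prod N C (gram (Pcol N x g)))
     | (x :: nat \<Rightarrow> 'a) g fv. pep_feasible \<mu> L R h N x g fv}"
  unfolding w_d_def pep_feasible_def trace_prod_def gram_def ..

lemma w_sdp_eq_Sup_sdp_feasible:
  "w_sdp \<mu> L R h N b C = Sup {ereal ((\<Sum>i\<le>N. b i * fv i) + trace_prod N C G) | G fv. sdp_feasible \<mu> L R h N G fv}"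
  unfolding w_sdp_def sdp_feasible_def ..

lemma sdp_feasible_if_pep_feasible:
  fixes x g :: "nat \<Rightarrow> 'a::euclidean_space"
  assumes "0 \<le> \<mu>" "ereal \<mu> < L" "R \<ge> 0" and "pep_feasible \<mu> L R h N x g fv"
  shows "sdp_feasible \<mu> L R h N (gram (Pcol N x g)) fv"
  unfolding sdp_feasible_def
proof (intro conjI psd_mat_gram)
  have interp: "interpolable \<mu> L ({(x i, g i, fv i) | i. i \<le> N} \<union> {(0, 0, 0)})"
    and iter: "\<forall>i\<in>{1..N}. x i = x 0 - (\<Sum>k<i. h i k *\<^sub>R g k)" and dist: "norm (x 0) \<le> R"
    using assms(4) unfolding pep_feasible_def by simp_all
  show "\<forall>i\<in>Iset N. \<forall>j\<in>Iset N. fopt fv j - fopt fv i + trace_prod N (gram (Pcol N x g)) (Amat \<mu> L h N i j) \<le> 0"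
    using interp unfolding pep_data_eq_pep_points[OF iter] interpolable_iff_sdp_constraints[OF assms(1,2)] .
  have "trace_prod N (gram (Pcol N x g)) (AR N) = (norm (x 0))\<^sup>2"
    by (simp add: trace_prod_AR gram_def Pcol_def power2_norm_eq_inner)
  then show "trace_prod N (gram (Pcol N x g)) (AR N) \<le> R\<^sup>2" using dist by (simp add: power_mono)
qed

lemma pep_feasible_if_sdp_feasible:
  assumes "0 \<le> \<mu>" "ereal \<mu> < L" "R \<ge> 0" "N + 2 \<le> DIM('a::euclidean_space)"
    and "sdp_feasible \<mu> L R h N G fv"
  shows "\<exists>(x :: nat \<Rightarrow> 'a) g. pep_feasible \<mu> L R h N x g fv \<and> (\<forall>p\<le>N+1. \<forall>q\<le>N+1. gram (Pcol N x g) p q = G p q)"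
proof -
  have cons: "\<forall>i\<in>Iset N. \<forall>j\<in>Iset N. fopt fv j - fopt fv i + trace_prod N G (Amat \<mu> L h N i j) \<le> 0"
    and ar: "trace_prod N G (AR N) \<le> R\<^sup>2" and psd: "psd_mat N G"
    using assms(5) unfolding sdp_feasible_def by simp_all
  obtain P :: "nat \<Rightarrow> 'a" where P: "\<forall>p<N+2. \<forall>q<N+2. G p q = gram P p q"
    using psd_upto_gram_factorization[OF psd[unfolded psd_mat_iff_psd_upto] assms(4)] by blast
  define x where "x i = P (N+1) - (\<Sum>k<i. h i k *\<^sub>R P k)" for i
  have iter: "\<forall>i\<in>{1..N}. x i = x 0 - (\<Sum>k<i. h i k *\<^sub>R P k)" by (simp add: x_def)
  have "Pcol N x P p = P p" if "p \<le> N + 1" for p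
  proof (cases "p \<le> N")
    case False
    then have "p = N + 1" using that by simp
    then show ?thesis by (simp add: Pcol_def x_def)
  qed (simp add: Pcol_def)
  then have gram: "\<forall>p\<le>N+1. \<forall>q\<le>N+1. gram (Pcol N x P) p q = G p q"
    using P by (simp add: gram_def)
  then have "trace_prod N G A = trace_prod N (gram (Pcol N x P)) A" for A
    by (intro trace_prod_cong) simp_all
  then have "interpolable \<mu> L ({(x i, P i, fv i) | i. i \<le> N} \<union> {(0, 0, 0)})"
    using cons unfolding pep_data_eq_pep_points[OF iter] interpolable_iff_sdp_constraints[OF assms(1,2)] by simp
  moreover have "norm (x 0 - 0) \<le> R"
  proof -
    have "(norm (x 0))\<^sup>2 = G (N+1) (N+1)"
      using gram[rule_format, of "N+1" "N+1"] by (simp add: gram_def Pcol_def power2_norm_eq_inner)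
    then have "(norm (x 0))\<^sup>2 \<le> R\<^sup>2" using ar by (simp add: trace_prod_AR)
    then have "norm (x 0) \<le> R" using assms(3) by (rule power2_le_imp_le)
    then show ?thesis by simp
  qed
  ultimately show ?thesis using iter gram unfolding pep_feasible_def by (intro exI[of _ x] exI[of _ P]) simp
qed

theorem theorem5:
  fixes \<mu> :: real and L :: ereal and R :: real and N :: nat
    and h :: "nat \<Rightarrow> nat \<Rightarrow> real" and b :: "nat \<Rightarrow> real" and C :: "nat \<Rightarrow> nat \<Rightarrow> real"
  assumes "0 \<le> \<mu>" and "ereal \<mu> < L"
    and "N \<ge> 1" and "R \<ge> 0"
    and "\<forall>i\<in>{1..N}. \<forall>k<N. i \<le> k \<longrightarrow> h i k = 0"
    and "sym_mat N C"
    and "DIM('a::euclidean_space) \<ge> N + 2"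
  shows "w_d TYPE('a) \<mu> L R h N b C = w_sdp \<mu> L R h N b C"
  unfolding w_d_eq_Sup_pep_feasible w_sdp_eq_Sup_sdp_feasible
proof (rule arg_cong[where f = Sup], intro equalityI subsetI)
  fix z assume "z \<in> {ereal ((\<Sum>i\<le>N. b i * fv i) + trace_prod N C (gram (Pcol N x g)))
     | (x :: nat \<Rightarrow> 'a) g fv. pep_feasible \<mu> L R h N x g fv}"
  then show "z \<in> {ereal ((\<Sum>i\<le>N. b i * fv i) + trace_prod N C G) | G fv. sdp_feasible \<mu> L R h N G fv}"
    using sdp_feasible_if_pep_feasible[OF assms(1,2,4)] by blast
next
  fix z assume "z \<in> {ereal ((\<Sum>i\<le>N. b i * fv i) + trace_prod N C G) | G fv. sdp_feasible \<mu> L R h N G fv}"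
  then obtain G fv where z: "z = ereal ((\<Sum>i\<le>N. b i * fv i) + trace_prod N C G)"
    and "sdp_feasible \<mu> L R h N G fv" by blast
  then obtain x g :: "nat \<Rightarrow> 'a" where "pep_feasible \<mu> L R h N x g fv"
    and "\<forall>p\<le>N+1. \<forall>q\<le>N+1. gram (Pcol N x g) p q = G p q"
    using pep_feasible_if_sdp_feasible[OF assms(1,2,4,7)] by blast
  moreover from this(2) have "trace_prod N C G = trace_prod N C (gram (Pcol N x g))"
    by (intro trace_prod_cong) simp_all
  then have "z = ereal ((\<Sum>i\<le>N. b i * fv i) + trace_prod N C (gram (Pcol N x g)))"
    unfolding z by simp
  ultimately show "z \<in> {ereal ((\<Sum>i\<le>N. b i * fv i) + trace_prod N C (gram (Pcol N x g)))
     | (x :: nat \<Rightarrow> 'a) g fv. pep_feasible \<mu> L R h N x g fv}"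
    by blast
qed

end
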